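(* Let $\mathcal{U},\mathcal{Y}$ be Hilbert spaces, $\mathcal{F}$ a closed subspace of $\mathcal{U}$, and $\omega=\begin{pmatrix}\omega_1\\ \omega_2\end{pmatrix}:\mathcal{F}\to\mathcal{Y}\oplus\mathcal{U}$ a contraction. Define for $\lambda\in\mathbb{D}$ $\Phi_{2,1}(\lambda)=\Pi_{\mathcal{Y}}D_{\omega^*}+\lambda\omega_1\Pi_{\mathcal{F}}(I_{\mathcal{U}}-\lambda\omega_2\Pi_{\mathcal{F}})^{-1}\Pi_{\mathcal{U}}D_{\omega^*}$ (an operator from $\mathcal{D}_{\omega^*}$ to $\mathcal{Y}$) and $\Phi_{2,2}(\lambda)=\omega_1\Pi_{\mathcal{F}}(I_{\mathcal{U}}-\lambda\omega_2\Pi_{\mathcal{F}})^{-1}$. Then $\Gamma_{\Phi_{2,2}}:\mathcal{U}\to H^2(\mathcal{Y})$ is a co-isometry if and only if $\Phi_{2,1}(\lambda)=0$ for every $\lambda\in\mathbb{D}$.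
   Context: $\mathbb{D}$ is the open unit disc. $\Pi_{\mathcal{F}}:\mathcal{U}\to\mathcal{F}$ is the orthogonal projection; $D_{\omega^*}=(I-\omega\omega^* )^{1/2}$ on $\mathcal{Y}\oplus\mathcal{U}$, $\mathcal{D}_{\omega^*}$ is the closure of its range, and $\Pi_{\mathcal{Y}},\Pi_{\mathcal{U}}$ are the coordinate projections of $\mathcal{Y}\oplus\mathcal{U}$. $\Gamma_{\Phi_{2,2}}$ is defined by $(\Gamma_{\Phi_{2,2}}u)(\lambda)=\Phi_{2,2}(\lambda)u$, and is known to be a contraction into the Hardy space $H^2(\mathcal{Y})$. *)

theory Defs
  imports "HOL-Analysis.Analysis"
begin

text \<open>The distribution has no complex Hilbert spaces, so we introduce the class here.
  Convention: the inner product is conjugate-linear in the first, linear in the second argument.\<close>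

class cinner_space = real_normed_vector +
  fixes cscale :: "complex \<Rightarrow> 'a \<Rightarrow> 'a"
    and cinner :: "'a \<Rightarrow> 'a \<Rightarrow> complex"
  assumes cscale_add_right: "cscale a (x + y) = cscale a x + cscale a y"
    and cscale_add_left: "cscale (a + b) x = cscale a x + cscale b x"
    and cscale_cscale: "cscale a (cscale b x) = cscale (a * b) x"
    and cscale_one: "cscale 1 x = x"
    and scaleR_cscale: "scaleR r x = cscale (complex_of_real r) x"
    and cinner_commute: "cinner x y = cnj (cinner y x)"
    and cinner_add_right: "cinner x (y + z) = cinner x y + cinner x z"
    and cinner_cscale_right: "cinner x (cscale a y) = a * cinner x y"
    and cinner_norm: "cinner x x = complex_of_real ((norm x)\<^sup>2)"

class chilbert_space = cinner_space + complete_space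

definition closed_csubspace :: "'a::chilbert_space set \<Rightarrow> bool" where
  "closed_csubspace F \<longleftrightarrow> 0 \<in> F \<and> (\<forall>x\<in>F. \<forall>y\<in>F. x + y \<in> F)
      \<and> (\<forall>a. \<forall>x\<in>F. cscale a x \<in> F) \<and> closed F"

definition proj :: "'a::chilbert_space set \<Rightarrow> 'a \<Rightarrow> 'a" where
  "proj F x = (THE p. p \<in> F \<and> (\<forall>v\<in>F. cinner v (x - p) = 0))"

text \<open>\<open>\<omega> = (\<omega>1, \<omega>2) : F \<rightarrow> Y \<oplus> U\<close> is a (complex linear) contraction; only its values on F matter.\<close>
definition contraction_on :: "'u::chilbert_space set \<Rightarrow> ('u \<Rightarrow> 'y::chilbert_space) \<Rightarrow> ('u \<Rightarrow> 'u) \<Rightarrow> bool" where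
  "contraction_on F w1 w2 \<longleftrightarrow>
     (\<forall>x\<in>F. \<forall>y\<in>F. w1 (x + y) = w1 x + w1 y \<and> w2 (x + y) = w2 x + w2 y)
   \<and> (\<forall>a. \<forall>x\<in>F. w1 (cscale a x) = cscale a (w1 x) \<and> w2 (cscale a x) = cscale a (w2 x))
   \<and> (\<forall>x\<in>F. (norm (w1 x))\<^sup>2 + (norm (w2 x))\<^sup>2 \<le> (norm x)\<^sup>2)"

definition pscale :: "complex \<Rightarrow> 'y::chilbert_space \<times> 'u::chilbert_space \<Rightarrow> 'y \<times> 'u" where
  "pscale a p = (cscale a (fst p), cscale a (snd p))"

definition pinner :: "'y::chilbert_space \<times> 'u::chilbert_space \<Rightarrow> 'y \<times> 'u \<Rightarrow> complex" where
  "pinner p q = cinner (fst p) (fst q) + cinner (snd p) (snd q)"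

definition omega_adj :: "'u::chilbert_space set \<Rightarrow> ('u \<Rightarrow> 'y::chilbert_space) \<Rightarrow> ('u \<Rightarrow> 'u) \<Rightarrow> 'y \<times> 'u \<Rightarrow> 'u" where
  "omega_adj F w1 w2 p = (THE f. f \<in> F \<and> (\<forall>g\<in>F. cinner g f = cinner (w1 g) (fst p) + cinner (w2 g) (snd p)))"

definition positive_op :: "('y::chilbert_space \<times> 'u::chilbert_space \<Rightarrow> 'y \<times> 'u) \<Rightarrow> bool" where
  "positive_op D \<longleftrightarrow> bounded_linear D \<and> (\<forall>a p. D (pscale a p) = pscale a (D p))
      \<and> (\<forall>p. \<exists>r\<ge>0. pinner p (D p) = complex_of_real r)"

definition Dstar :: "'u::chilbert_space set \<Rightarrow> ('u \<Rightarrow> 'y::chilbert_space) \<Rightarrow> ('u \<Rightarrow> 'u) \<Rightarrow> 'y \<times> 'u \<Rightarrow> 'y \<times> 'u" where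
  "Dstar F w1 w2 = (THE D. positive_op D \<and>
      (\<forall>p. D (D p) = p - (w1 (omega_adj F w1 w2 p), w2 (omega_adj F w1 w2 p))))"

definition resolv :: "'u::chilbert_space set \<Rightarrow> ('u \<Rightarrow> 'u) \<Rightarrow> complex \<Rightarrow> 'u \<Rightarrow> 'u" where
  "resolv F w2 z = inv (\<lambda>x. x - cscale z (w2 (proj F x)))"

definition Phi21 :: "'u::chilbert_space set \<Rightarrow> ('u \<Rightarrow> 'y::chilbert_space) \<Rightarrow> ('u \<Rightarrow> 'u) \<Rightarrow> complex \<Rightarrow> 'y \<times> 'u \<Rightarrow> 'y" where
  "Phi21 F w1 w2 z p = fst (Dstar F w1 w2 p)
      + cscale z (w1 (proj F (resolv F w2 z (snd (Dstar F w1 w2 p)))))"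

definition Phi22 :: "'u::chilbert_space set \<Rightarrow> ('u \<Rightarrow> 'y::chilbert_space) \<Rightarrow> ('u \<Rightarrow> 'u) \<Rightarrow> complex \<Rightarrow> 'u \<Rightarrow> 'y" where
  "Phi22 F w1 w2 z u = w1 (proj F (resolv F w2 z u))"

text \<open>\<open>H^2(Y)\<close>: functions on the disc given by power series with square-summable coefficients;
  only values on the open unit disc matter.\<close>
definition H2 :: "(complex \<Rightarrow> 'y::chilbert_space) set" where
  "H2 = {f. \<exists>a. summable (\<lambda>n. (norm (a n))\<^sup>2) \<and>
                (\<forall>z\<in>ball 0 1. (\<lambda>n. cscale (z ^ n) (a n)) sums f z)}"

definition h2_coeffs :: "(complex \<Rightarrow> 'y::chilbert_space) \<Rightarrow> nat \<Rightarrow> 'y" where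
  "h2_coeffs f = (SOME a. \<forall>z\<in>ball 0 1. (\<lambda>n. cscale (z ^ n) (a n)) sums f z)"

definition h2_inner :: "(complex \<Rightarrow> 'y::chilbert_space) \<Rightarrow> (complex \<Rightarrow> 'y) \<Rightarrow> complex" where
  "h2_inner f g = (\<Sum>n. cinner (h2_coeffs f n) (h2_coeffs g n))"

text \<open>A map \<open>G : U \<rightarrow> H^2(Y)\<close> is a co-isometry: it maps into \<open>H^2(Y)\<close> and its adjoint
  \<open>S = G*\<close> satisfies \<open>G G* = I\<close> on \<open>H^2(Y)\<close> (equality of elements of \<open>H^2\<close> = equality on the disc).\<close>
definition h2_coisometry :: "('u::chilbert_space \<Rightarrow> complex \<Rightarrow> 'y::chilbert_space) \<Rightarrow> bool" where
  "h2_coisometry G \<longleftrightarrow> (\<forall>u. G u \<in> H2) \<and>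
     (\<exists>S. (\<forall>u. \<forall>f\<in>H2. h2_inner (G u) f = cinner u (S f)) \<and>
          (\<forall>f\<in>H2. \<forall>z\<in>ball 0 1. G (S f) z = f z))"

end

theory Submission
  imports Defs "HOL-Computational_Algebra.Formal_Power_Series"
begin

text \<open>Write \<open>A = \<omega>\<^sub>2 \<Pi>\<^sub>F\<close> and \<open>C = \<omega>\<^sub>1 \<Pi>\<^sub>F\<close>. Then \<open>\<Phi>\<^sub>2\<^sub>2(\<lambda>) = \<Sum>\<^sub>n \<lambda>\<^sup>n C A\<^sup>n\<close>, so \<open>\<Gamma>\<^sub>\<Phi>\<^sub>2\<^sub>2 u\<close>
  has Taylor coefficients \<open>C A\<^sup>n u\<close> and its adjoint is \<open>v \<mapsto> \<Sum>\<^sub>n A\<^sup>*\<^sup>n C\<^sup>* v\<^sub>n\<close>, where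
  \<open>\<omega>\<^sup>*(y, u) = C\<^sup>* y + A\<^sup>* u\<close>. Since \<open>\<parallel>\<omega>\<^sup>* p\<parallel>\<^sup>2 + \<parallel>D\<^sub>\<omega>\<^sub>* p\<parallel>\<^sup>2 = \<parallel>p\<parallel>\<^sup>2\<close>, both sides of the
  equivalence reduce to the same condition: \<open>D\<^sub>\<omega>\<^sub>*\<close> vanishes at \<open>(y, 0)\<close> and at every
  \<open>(0, A\<^sup>*\<^sup>n C\<^sup>* y)\<close>. A co-isometry makes every \<open>A\<^sup>*\<^sup>n C\<^sup>*\<close> isometric, which forces this;
  conversely, under this condition \<open>\<omega>\<omega>\<^sup>*\<close> fixes \<open>(v\<^sub>0, \<Gamma>\<^sup>*(shifted v))\<close>, which shows
  \<open>\<Gamma>\<Gamma>\<^sup>* = I\<close> one coefficient at a time. For \<open>\<Phi>\<^sub>2\<^sub>1\<close>, the adjoint identity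
  \<open>\<langle>\<Phi>\<^sub>2\<^sub>1(\<lambda>) p, y\<rangle> = \<langle>p, D\<^sub>\<omega>\<^sub>*(y, \<mu> \<Sum>\<^sub>n \<mu>\<^sup>n A\<^sup>*\<^sup>n C\<^sup>* y)\<rangle>\<close> with \<open>\<mu> = cnj \<lambda>\<close> exhibits a
  power series in \<open>\<mu>\<close> whose coefficients are exactly these vectors, so \<open>\<Phi>\<^sub>2\<^sub>1\<close> vanishes on
  the closure of the range of \<open>D\<^sub>\<omega>\<^sub>*\<close> iff they all vanish. The square root
  \<open>D\<^sub>\<omega>\<^sub>* = (I - \<omega>\<omega>\<^sup>*)\<^sup>1\<^sup>/\<^sup>2\<close> is identified with the binomial series of \<open>\<surd>(1 - x)\<close> in \<open>\<omega>\<omega>\<^sup>*\<close>.\<close>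

subclass (in chilbert_space) banach ..

lemma cinner_add_left: "cinner (x + y) z = cinner x z + cinner y z"
  by (metis cinner_add_right cinner_commute complex_cnj_add)

lemma cinner_cscale_left: "cinner (cscale a x) y = cnj a * cinner x y"
  by (metis cinner_commute cinner_cscale_right complex_cnj_mult)

lemma cinner_zero_right [simp]: "cinner x 0 = 0"
  using cinner_add_right[of x 0 0] by simp

lemma cinner_zero_left [simp]: "cinner 0 x = 0"
  using cinner_add_left[of 0 0 x] by simp

lemma cinner_scaleR_right: "cinner x (r *\<^sub>R y) = complex_of_real r * cinner x y"
  by (simp add: scaleR_cscale cinner_cscale_right)

lemma cinner_scaleR_left: "cinner (r *\<^sub>R x) y = complex_of_real r * cinner x y"
  by (simp add: scaleR_cscale cinner_cscale_left)

lemma cinner_minus_right: "cinner x (- y) = - cinner x y"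
  using cinner_scaleR_right[of x "-1" y] by simp

lemma cinner_diff_right: "cinner x (y - z) = cinner x y - cinner x z"
  using cinner_add_right[of x "y - z" z] by simp

lemma Re_cinner_self: "Re (cinner x x) = (norm x)\<^sup>2"
  by (simp add: cinner_norm)

lemma cinner_self_eq_0 [simp]: "cinner x x = 0 \<longleftrightarrow> x = 0"
  by (simp add: cinner_norm)

lemma cscale_zero_right [simp]: "cscale a 0 = 0"
  using cscale_add_right[of a 0 0] by simp

lemma cscale_diff_right: "cscale a (x - y) = cscale a x - cscale a y"
  using cscale_add_right[of a "x - y" y] by simp

lemma cscale_scaleR: "cscale a (r *\<^sub>R x) = r *\<^sub>R cscale a x"
  by (simp add: scaleR_cscale cscale_cscale mult.commute)

lemma norm_cscale: "norm (cscale a x) = cmod a * norm x"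
proof -
  have "complex_of_real ((norm (cscale a x))\<^sup>2) = cinner (cscale a x) (cscale a x)"
    by (rule cinner_norm[symmetric])
  also have "\<dots> = cnj a * a * complex_of_real ((norm x)\<^sup>2)"
    by (simp add: cinner_cscale_left cinner_cscale_right cinner_norm[of x])
  also have "cnj a * a = complex_of_real ((cmod a)\<^sup>2)"
    by (simp only: complex_norm_square mult.commute[of "cnj a" a])
  finally have "(norm (cscale a x))\<^sup>2 = (cmod a * norm x)\<^sup>2"
    by (metis of_real_eq_iff of_real_mult power_mult_distrib)
  then show ?thesis
    by (simp add: power2_eq_iff_nonneg)
qed

lemma bounded_linear_cscale: "bounded_linear (cscale a)"
  by (rule bounded_linear_intro[where K="cmod a"])
    (simp_all add: cscale_add_right cscale_scaleR norm_cscale mult.commute)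

lemma norm_add_sq: "(norm (x + y))\<^sup>2 = (norm x)\<^sup>2 + (norm y)\<^sup>2 + 2 * Re (cinner x y)"
proof -
  have "(norm (x + y))\<^sup>2 = Re (cinner (x + y) (x + y))"
    by (simp add: Re_cinner_self)
  also have "\<dots> = (norm x)\<^sup>2 + (norm y)\<^sup>2 + Re (cinner x y + cnj (cinner x y))"
    by (simp add: cinner_add_left cinner_add_right Re_cinner_self cinner_commute[of y x])
  finally show ?thesis by simp
qed

lemma norm_cinner_le: "cmod (cinner x y) \<le> norm x * norm y"
proof (cases "y = 0")
  case False
  define n where "n = (norm y)\<^sup>2"
  have n: "n > 0" using False by (simp add: n_def)
  define c where "c = cinner y x"
  define t where "t = c / complex_of_real n"
  have cxy: "cinner x y = cnj c" by (simp add: c_def cinner_commute[of x y])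
  have "0 \<le> (norm (x - cscale t y))\<^sup>2" by simp
  also have "\<dots> = (norm x)\<^sup>2 + (cmod t)\<^sup>2 * n - 2 * Re (t * cinner x y)"
    using norm_add_sq[of x "- cscale t y"]
    by (simp add: norm_cscale cinner_minus_right cinner_cscale_right power_mult_distrib n_def)
  also have "\<dots> = (norm x)\<^sup>2 - (cmod c)\<^sup>2 / n"
  proof -
    have "t * cinner x y = complex_of_real ((cmod c)\<^sup>2 / n)"
      using complex_norm_square[of c] by (simp add: t_def cxy)
    moreover have "cmod t = cmod c / n" using n by (simp add: t_def norm_divide)
    ultimately show ?thesis
      using n by (simp add: power_divide power2_eq_square)
  qed
  finally have "(cmod c)\<^sup>2 \<le> (norm x)\<^sup>2 * n"
    using n by (simp add: field_simps)
  then have "(cmod c)\<^sup>2 \<le> (norm x * norm y)\<^sup>2"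
    by (simp add: n_def power_mult_distrib)
  then show ?thesis
    by (simp add: cxy power2_le_iff_abs_le)
qed simp

lemma bounded_linear_cinner_right: "bounded_linear (\<lambda>y. cinner x y)"
  by (rule bounded_linear_intro[where K="norm x"])
    (simp_all add: cinner_add_right cinner_scaleR_right scaleR_conv_of_real
      norm_cinner_le[of x, THEN order_trans] mult.commute)

lemma bounded_linear_cinner_left: "bounded_linear (\<lambda>x. cinner x y)"
  by (rule bounded_linear_intro[where K="norm y"])
    (simp_all add: cinner_add_left cinner_scaleR_left scaleR_conv_of_real norm_cinner_le)

instantiation prod :: (chilbert_space, chilbert_space) cinner_space
begin

definition cscale_prod_def: "cscale a p = (cscale a (fst p), cscale a (snd p))"
definition cinner_prod_def: "cinner p q = cinner (fst p) (fst q) + cinner (snd p) (snd q)"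

instance
proof
  fix a b :: complex and x y z :: "'a \<times> 'b" and r :: real
  show "cscale a (x + y) = cscale a x + cscale a y"
    by (simp add: cscale_prod_def cscale_add_right)
  show "cscale (a + b) x = cscale a x + cscale b x"
    by (simp add: cscale_prod_def cscale_add_left)
  show "cscale a (cscale b x) = cscale (a * b) x"
    by (simp add: cscale_prod_def cscale_cscale)
  show "cscale 1 x = x"
    by (simp add: cscale_prod_def cscale_one)
  show "r *\<^sub>R x = cscale (complex_of_real r) x"
    by (simp add: cscale_prod_def scaleR_cscale prod_eq_iff)
  show "cinner x y = cnj (cinner y x)"
    by (simp add: cinner_prod_def cinner_commute[of "fst x"] cinner_commute[of "snd x"])
  show "cinner x (y + z) = cinner x y + cinner x z"
    by (simp add: cinner_prod_def cinner_add_right)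
  show "cinner x (cscale a y) = a * cinner x y"
    by (simp add: cinner_prod_def cscale_prod_def cinner_cscale_right algebra_simps)
  show "cinner x x = complex_of_real ((norm x)\<^sup>2)"
    by (simp add: cinner_prod_def norm_prod_def cinner_norm)
qed

end

instance prod :: (chilbert_space, chilbert_space) chilbert_space ..

lemma pscale_eq_cscale: "pscale = cscale"
  by (auto simp: fun_eq_iff pscale_def cscale_prod_def)

lemma pinner_eq_cinner: "pinner = cinner"
  by (auto simp: fun_eq_iff pinner_def cinner_prod_def)

lemma cscale_Pair [simp]: "cscale a (x, y) = (cscale a x, cscale a y)"
  by (simp add: cscale_prod_def)

lemma cinner_Pair [simp]: "cinner (x, y) (x', y') = cinner x x' + cinner y y'"
  by (simp add: cinner_prod_def)

section \<open>Riesz representation and orthogonal projection\<close>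

context
  fixes F :: "'a::chilbert_space set"
  assumes F: "closed_csubspace F"
begin

lemma closed_csubspace_zero: "0 \<in> F"
  using F by (simp add: closed_csubspace_def)

lemma closed_csubspace_add: "x \<in> F \<Longrightarrow> y \<in> F \<Longrightarrow> x + y \<in> F"
  using F by (simp add: closed_csubspace_def)

lemma closed_csubspace_cscale: "x \<in> F \<Longrightarrow> cscale a x \<in> F"
  using F by (simp add: closed_csubspace_def)

lemma closed_csubspace_scaleR: "x \<in> F \<Longrightarrow> r *\<^sub>R x \<in> F"
  by (simp add: scaleR_cscale closed_csubspace_cscale)

lemma closed_csubspace_diff: "x \<in> F \<Longrightarrow> y \<in> F \<Longrightarrow> x - y \<in> F"
  using closed_csubspace_add[of x "(-1) *\<^sub>R y"] closed_csubspace_scaleR[of y "-1"] by simp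

end

lemma quadratic_nonneg_imp_linear_coeff_0:
  fixes a b :: real
  assumes nonneg: "\<And>t. 0 \<le> a * t + b * t\<^sup>2" and "0 \<le> b"
  shows "a = 0"
proof -
  have "b + 1 \<noteq> 0" using \<open>0 \<le> b\<close> by simp
  have "0 \<le> a * (- a / (b + 1)) + b * (- a / (b + 1))\<^sup>2" by (rule nonneg)
  also have "\<dots> = - a\<^sup>2 / (b + 1)\<^sup>2"
    using \<open>b + 1 \<noteq> 0\<close> by (simp add: divide_simps power2_eq_square; algebra)
  finally have "a\<^sup>2 / (b + 1)\<^sup>2 \<le> 0" by simp
  with \<open>b + 1 \<noteq> 0\<close> have "a\<^sup>2 \<le> 0"
    by (simp add: divide_le_0_iff)
  then show ?thesis by simp
qed

lemma Cauchy_if_dist_sq_le: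
  fixes s :: "nat \<Rightarrow> 'a::metric_space"
  assumes dist: "\<And>m n. (dist (s m) (s n))\<^sup>2 \<le> e m + e n" and e: "e \<longlonglongrightarrow> 0"
  shows "Cauchy s"
proof (rule metric_CauchyI)
  fix \<epsilon> :: real assume "0 < \<epsilon>"
  then have "\<forall>\<^sub>F n in sequentially. e n < \<epsilon>\<^sup>2 / 2"
    using e by (intro order_tendstoD) auto
  then obtain N where N: "\<And>n. n \<ge> N \<Longrightarrow> e n < \<epsilon>\<^sup>2 / 2"
    by (auto simp: eventually_sequentially)
  have "dist (s m) (s n) < \<epsilon>" if "m \<ge> N" "n \<ge> N" for m n
  proof -
    have "(dist (s m) (s n))\<^sup>2 < \<epsilon>\<^sup>2"
      using dist[of m n] N[OF that(1)] N[OF that(2)] by linarith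
    with \<open>0 < \<epsilon>\<close> show ?thesis by (simp add: power_less_imp_less_base)
  qed
  then show "\<exists>N. \<forall>m\<ge>N. \<forall>n\<ge>N. dist (s m) (s n) < \<epsilon>" by blast
qed

locale bounded_antilinear_on =
  fixes F :: "'a::chilbert_space set" and L :: "'a \<Rightarrow> complex" and M :: real
  assumes subspace: "closed_csubspace F"
    and add: "g \<in> F \<Longrightarrow> h \<in> F \<Longrightarrow> L (g + h) = L g + L h"
    and cscale: "g \<in> F \<Longrightarrow> L (cscale a g) = cnj a * L g"
    and bounded: "g \<in> F \<Longrightarrow> cmod (L g) \<le> M * norm g"
begin

lemma scaleR: "g \<in> F \<Longrightarrow> L (r *\<^sub>R g) = complex_of_real r * L g"
  using cscale[of g "complex_of_real r"] by (simp add: scaleR_cscale)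

lemma diff: "g \<in> F \<Longrightarrow> h \<in> F \<Longrightarrow> L (g - h) = L g - L h"
  using add[of "g - h" h] closed_csubspace_diff[OF subspace] by fastforce

lemma tendsto:
  assumes "\<And>n. s n \<in> F" "s \<longlonglongrightarrow> m" "m \<in> F"
  shows "(\<lambda>n. L (s n)) \<longlonglongrightarrow> L m"
proof -
  have "norm (L (s n) - L m) \<le> norm (s n - m) * \<bar>M\<bar>" for n
  proof -
    have "norm (L (s n) - L m) \<le> M * norm (s n - m)"
      using bounded[OF closed_csubspace_diff[OF subspace assms(1,3)]] diff[OF assms(1,3)] by simp
    also have "\<dots> \<le> \<bar>M\<bar> * norm (s n - m)"
      by (intro mult_right_mono) simp_all
    finally show ?thesis by (simp add: mult.commute)
  qed
  then have "(\<lambda>n. L (s n) - L m) \<longlonglongrightarrow> 0"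
    by (intro tendsto_0_le[OF LIM_zero[OF assms(2)]] always_eventually) blast
  then show ?thesis
    by (rule LIM_zero_cancel)
qed

text \<open>The representing vector is found as the minimiser of this energy.\<close>

definition energy :: "'a \<Rightarrow> real" where
  "energy g = (norm g)\<^sup>2 - 2 * Re (L g)"

lemma energy_lower_bound: "g \<in> F \<Longrightarrow> - M\<^sup>2 \<le> energy g"
proof -
  assume "g \<in> F"
  have "Re (L g) \<le> cmod (L g)" by (rule complex_Re_le_cmod)
  also have "\<dots> \<le> M * norm g" using \<open>g \<in> F\<close> by (rule bounded)
  also have "\<dots> \<le> \<bar>M\<bar> * norm g" by (intro mult_right_mono) simp_all
  finally have "Re (L g) \<le> \<bar>M\<bar> * norm g" .
  moreover have "0 \<le> (norm g - \<bar>M\<bar>)\<^sup>2" by simp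
  ultimately show ?thesis
    unfolding energy_def by (simp add: power2_diff algebra_simps)
qed

lemma energy_parallelogram:
  assumes lower: "\<And>g. g \<in> F \<Longrightarrow> I \<le> energy g" and "a \<in> F" "b \<in> F"
  shows "(norm (a - b))\<^sup>2 \<le> 2 * (energy a - I) + 2 * (energy b - I)"
proof -
  define c where "c = (1/2::real) *\<^sub>R (a + b)"
  have "c \<in> F"
    unfolding c_def using assms(2,3) subspace
    by (intro closed_csubspace_scaleR closed_csubspace_add)
  have "L c = complex_of_real (1/2) * (L a + L b)"
    unfolding c_def using scaleR add assms(2,3) closed_csubspace_add[OF subspace] by simp
  then have "Re (L c) = (Re (L a) + Re (L b)) / 2"
    by (simp only: times_complex.sel plus_complex.sel Re_complex_of_real Im_complex_of_real)
  moreover have "(norm c)\<^sup>2 = (norm (a + b))\<^sup>2 / 4"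
    by (simp add: c_def power_mult_distrib power_divide)
  ultimately have "energy c = (norm (a + b))\<^sup>2 / 4 - Re (L a) - Re (L b)"
    unfolding energy_def by (simp add: field_simps)
  moreover have "(norm (a + b))\<^sup>2 + (norm (a - b))\<^sup>2 = 2 * (norm a)\<^sup>2 + 2 * (norm b)\<^sup>2"
    using norm_add_sq[of a b] norm_add_sq[of a "- b"] by (simp add: cinner_minus_right)
  ultimately show ?thesis
    using lower[OF \<open>c \<in> F\<close>] unfolding energy_def by simp
qed

lemma energy_minimizer_exists: "\<exists>m\<in>F. \<forall>g\<in>F. energy m \<le> energy g"
proof -
  define I where "I = Inf (energy ` F)"
  have bdd: "bdd_below (energy ` F)"
    by (rule bdd_belowI2[where m="- M\<^sup>2"]) (rule energy_lower_bound)
  have I_le: "g \<in> F \<Longrightarrow> I \<le> energy g" for g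
    unfolding I_def using bdd by (simp add: cInf_lower)
  have "\<exists>g\<in>F. energy g < I + inverse (real (Suc n))" for n
    using cInf_lessD[of "energy ` F" "I + inverse (real (Suc n))"] closed_csubspace_zero[OF subspace]
    unfolding I_def by auto
  then obtain s where sF: "\<And>n. s n \<in> F" and s: "\<And>n. energy (s n) < I + inverse (real (Suc n))"
    by metis
  have "Cauchy s"
  proof (rule Cauchy_if_dist_sq_le)
    show "(dist (s m) (s n))\<^sup>2 \<le> 2 * inverse (real (Suc m)) + 2 * inverse (real (Suc n))" for m n
      using energy_parallelogram[OF I_le sF sF, of m n] s[of m] s[of n]
      by (simp add: dist_norm)
    show "(\<lambda>n. 2 * inverse (real (Suc n))) \<longlonglongrightarrow> 0"
      using tendsto_mult_right_zero[OF LIMSEQ_inverse_real_of_nat] by simp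
  qed
  then obtain m where lim: "s \<longlonglongrightarrow> m"
    using Cauchy_convergent_iff convergent_def by blast
  have "m \<in> F"
    using closed_sequentially[OF _ sF lim] subspace by (simp add: closed_csubspace_def)
  have "(\<lambda>n. energy (s n)) \<longlonglongrightarrow> energy m"
    unfolding energy_def by (intro tendsto_intros lim tendsto[OF sF lim \<open>m \<in> F\<close>])
  moreover have "(\<lambda>n. I + inverse (real (Suc n))) \<longlonglongrightarrow> I"
    using tendsto_add[OF tendsto_const LIMSEQ_inverse_real_of_nat, of I] by simp
  ultimately have "energy m \<le> I"
    using s by (intro LIMSEQ_le) (auto intro: less_imp_le)
  with \<open>m \<in> F\<close> I_le show ?thesis by force
qed

lemma energy_minimizer_represents:
  assumes "m \<in> F" and min: "\<And>g. g \<in> F \<Longrightarrow> energy m \<le> energy g" and "g \<in> F"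
  shows "cinner g m = L g"
proof -
  have Re_eq: "Re (cinner h m) = Re (L h)" if "h \<in> F" for h
  proof -
    \<comment> \<open>first variation of the energy along \<open>h\<close>\<close>
    have "0 \<le> (2 * Re (cinner m h) - 2 * Re (L h)) * t + (norm h)\<^sup>2 * t\<^sup>2" for t
    proof -
      have "m + t *\<^sub>R h \<in> F"
        using subspace \<open>m \<in> F\<close> that by (intro closed_csubspace_add closed_csubspace_scaleR)
      moreover have "L (m + t *\<^sub>R h) = L m + complex_of_real t * L h"
        using add[OF \<open>m \<in> F\<close> closed_csubspace_scaleR[OF subspace that]] scaleR[OF that] by simp
      ultimately show ?thesis
        using min[of "m + t *\<^sub>R h"]
        by (simp add: energy_def norm_add_sq cinner_scaleR_right power_mult_distrib algebra_simps)
    qed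
    then have "2 * Re (cinner m h) - 2 * Re (L h) = 0"
      by (rule quadratic_nonneg_imp_linear_coeff_0) simp
    then show ?thesis
      by (simp add: cinner_commute[of h m])
  qed
  have "Re (cinner (cscale \<i> g) m) = Re (L (cscale \<i> g))"
    by (rule Re_eq[OF closed_csubspace_cscale[OF subspace \<open>g \<in> F\<close>]])
  then have "Im (cinner g m) = Im (L g)"
    by (simp add: cinner_cscale_left cscale[OF \<open>g \<in> F\<close>])
  with Re_eq[OF \<open>g \<in> F\<close>] show ?thesis
    by (simp add: complex_eq_iff)
qed

theorem riesz_representation: "\<exists>!m. m \<in> F \<and> (\<forall>g\<in>F. cinner g m = L g)"
proof (rule ex_ex1I)
  show "\<exists>m. m \<in> F \<and> (\<forall>g\<in>F. cinner g m = L g)"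
    using energy_minimizer_exists energy_minimizer_represents by blast
next
  fix m m' assume m: "m \<in> F \<and> (\<forall>g\<in>F. cinner g m = L g)" and m': "m' \<in> F \<and> (\<forall>g\<in>F. cinner g m' = L g)"
  then have "m - m' \<in> F" using closed_csubspace_diff[OF subspace] by blast
  with m m' have "cinner (m - m') (m - m') = 0"
    by (simp add: cinner_diff_right)
  then show "m = m'" by simp
qed

end

context
  fixes F :: "'a::chilbert_space set"
  assumes F: "closed_csubspace F"
begin

lemma proj_ex1: "\<exists>!p. p \<in> F \<and> (\<forall>v\<in>F. cinner v (x - p) = 0)"
proof -
  interpret bounded_antilinear_on F "\<lambda>g. cinner g x" "norm x"
    by unfold_locales
      (auto simp: F cinner_add_left cinner_cscale_left norm_cinner_le mult.commute)
  have "p \<in> F \<and> (\<forall>v\<in>F. cinner v (x - p) = 0) \<longleftrightarrow> p \<in> F \<and> (\<forall>g\<in>F. cinner g p = cinner g x)" for p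
    by (auto simp: cinner_diff_right)
  with riesz_representation show ?thesis
    by simp
qed

lemma proj_in: "proj F x \<in> F"
  unfolding proj_def using theI'[OF proj_ex1] by blast

lemma proj_orthogonal: "v \<in> F \<Longrightarrow> cinner v (x - proj F x) = 0"
  unfolding proj_def using theI'[OF proj_ex1] by blast

lemma cinner_proj_right: "v \<in> F \<Longrightarrow> cinner v (proj F x) = cinner v x"
  using proj_orthogonal[of v x] by (simp add: cinner_diff_right)

lemma cinner_proj_left: "v \<in> F \<Longrightarrow> cinner (proj F x) v = cinner x v"
  using cinner_proj_right[of v x] by (metis cinner_commute)

lemma proj_unique: "p \<in> F \<Longrightarrow> (\<And>v. v \<in> F \<Longrightarrow> cinner v (x - p) = 0) \<Longrightarrow> proj F x = p"
  unfolding proj_def by (rule the1_equality[OF proj_ex1]) auto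

lemma proj_id: "x \<in> F \<Longrightarrow> proj F x = x"
  by (rule proj_unique) auto

lemma proj_add: "proj F (x + y) = proj F x + proj F y"
  by (rule proj_unique)
    (auto simp: closed_csubspace_add[OF F] proj_in cinner_diff_right cinner_add_right cinner_proj_right)

lemma proj_cscale: "proj F (cscale a x) = cscale a (proj F x)"
  by (rule proj_unique)
    (auto simp: closed_csubspace_cscale[OF F] proj_in cinner_diff_right cinner_cscale_right cinner_proj_right)

lemma norm_proj_le: "norm (proj F x) \<le> norm x"
proof -
  have "(norm x)\<^sup>2 = (norm (proj F x))\<^sup>2 + (norm (x - proj F x))\<^sup>2"
    using norm_add_sq[of "proj F x" "x - proj F x"] proj_orthogonal[OF proj_in, of x] by simp
  then have "(norm (proj F x))\<^sup>2 \<le> (norm x)\<^sup>2"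
    using zero_le_power2[of "norm (x - proj F x)"] by linarith
  then show ?thesis
    by (rule power2_le_imp_le) simp
qed

end

section \<open>Positive operators and the square root of \<open>I - K\<close>\<close>

definition positive_operator :: "('a::chilbert_space \<Rightarrow> 'a) \<Rightarrow> bool" where
  "positive_operator S \<longleftrightarrow> bounded_linear S \<and> (\<forall>a p. S (cscale a p) = cscale a (S p))
      \<and> (\<forall>p. \<exists>r\<ge>0. cinner p (S p) = complex_of_real r)"

lemma positive_op_iff_positive_operator: "positive_op S \<longleftrightarrow> positive_operator S"
  unfolding positive_op_def positive_operator_def pscale_eq_cscale pinner_eq_cinner ..

context
  fixes S :: "'a::chilbert_space \<Rightarrow> 'a"
  assumes S: "positive_operator S"
begin

interpretation bounded_linear S
  using S by (simp add: positive_operator_def)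

lemma positive_operator_cscale: "S (cscale a p) = cscale a (S p)"
  using S by (simp add: positive_operator_def)

lemma positive_operator_nonneg: "Im (cinner p (S p)) = 0 \<and> 0 \<le> Re (cinner p (S p))"
  using S unfolding positive_operator_def by (metis Im_complex_of_real Re_complex_of_real)

text \<open>Self-adjointness follows from the reality of the quadratic form, by polarisation
  along \<open>p + q\<close> and \<open>p + i q\<close>.\<close>

lemma positive_operator_selfadjoint: "cinner q (S p) = cinner (S q) p"
proof -
  define a where "a = cinner q (S p)"
  define b where "b = cinner p (S q)"
  have "Im (cinner (p + q) (S (p + q))) = 0"
    using positive_operator_nonneg by blast
  then have "Im (cinner p (S p)) + Im b + Im a + Im (cinner q (S q)) = 0"
    by (simp add: add cinner_add_left cinner_add_right a_def b_def)
  then have 1: "Im b + Im a = 0"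
    using positive_operator_nonneg[of p] positive_operator_nonneg[of q] by simp
  have "Im (cinner (p + cscale \<i> q) (S (p + cscale \<i> q))) = 0"
    using positive_operator_nonneg by blast
  then have "Im (cinner p (S p) + \<i> * b - \<i> * a + cinner q (S q)) = 0"
    by (simp add: add positive_operator_cscale cinner_add_left cinner_add_right cinner_cscale_left
        cinner_cscale_right a_def b_def algebra_simps)
  then have 2: "Re b - Re a = 0"
    using positive_operator_nonneg[of p] positive_operator_nonneg[of q] by simp
  have "cinner (S q) p = cnj b"
    by (simp add: b_def cinner_commute[of "S q"])
  with 1 2 show ?thesis
    by (simp add: complex_eq_iff a_def)
qed

lemma positive_operator_eq_0:
  assumes "cinner y (S y) = 0"
  shows "S y = 0"
proof -
  have "0 \<le> (2 * (norm (S y))\<^sup>2) * t + Re (cinner (S y) (S (S y))) * t\<^sup>2" for t :: real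
  proof -
    have "0 \<le> Re (cinner (y + t *\<^sub>R S y) (S (y + t *\<^sub>R S y)))"
      using positive_operator_nonneg by blast
    also have "\<dots> = Re (cinner y (S y)) + t * Re (cinner y (S (S y))) + t * Re (cinner (S y) (S y))
        + t * t * Re (cinner (S y) (S (S y)))"
      by (simp add: add scaleR cinner_add_left cinner_add_right cinner_scaleR_left
          cinner_scaleR_right algebra_simps)
    also have "\<dots> = (2 * (norm (S y))\<^sup>2) * t + Re (cinner (S y) (S (S y))) * t\<^sup>2"
      using assms positive_operator_selfadjoint[of y "S y"]
      by (simp add: Re_cinner_self power2_eq_square algebra_simps)
    finally show ?thesis .
  qed
  then have "2 * (norm (S y))\<^sup>2 = 0"
    by (rule quadratic_nonneg_imp_linear_coeff_0) (use positive_operator_nonneg in auto)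
  then show ?thesis by simp
qed

end

text \<open>All but the first are \<open>\<le> 0\<close> while the partial sums
  \<open>(m - 1/2 gchoose m)\<close> stay positive, so the series converges absolutely at \<open>x = 1\<close>.\<close>

definition sqrt_coeff :: "nat \<Rightarrow> real" where
  "sqrt_coeff n = (-1) ^ n * ((1/2::real) gchoose n)"

lemma sqrt_coeff_convolution:
  "(\<Sum>i\<le>k. sqrt_coeff i * sqrt_coeff (k - i)) = (if k = 0 then 1 else if k = 1 then -1 else 0)"
proof -
  have "(\<Sum>i\<le>k. sqrt_coeff i * sqrt_coeff (k - i))
      = (-1) ^ k * (\<Sum>i\<le>k. ((1/2::real) gchoose i) * ((1/2) gchoose (k - i)))"
    by (auto simp: sqrt_coeff_def sum_distrib_left power_add[symmetric] intro!: sum.cong)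
  also have "\<dots> = (-1) ^ k * ((1::real) gchoose k)"
    using gbinomial_Vandermonde[of "1/2::real" "1/2" k] by (simp add: atLeast0AtMost)
  also have "(1::real) gchoose k = of_nat (1 choose k)"
    using binomial_gbinomial[of 1 k, where 'a=real] by simp
  finally show ?thesis
    by (cases k; cases "k - 1") auto
qed

lemma sum_sqrt_coeff: "(\<Sum>k\<le>m. sqrt_coeff k) = ((real m - 1/2) gchoose m)"
proof -
  have "(\<Sum>k\<le>m. sqrt_coeff k) = (- 1) ^ m * ((1/2::real) - 1 gchoose m)"
    using gbinomial_sum_lower_neg[of "1/2::real" m] by (simp add: sqrt_coeff_def mult.commute)
  also have "((1/2::real) - 1 gchoose m) = (-1) ^ m * ((of_nat m - (1/2 - 1) - 1) gchoose m)"
    by (rule gbinomial_negated_upper)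
  finally show ?thesis
    by (simp flip: power_add power_mult_distrib)
qed

lemma gbinomial_half_Suc:
  "((real (Suc m) - 1/2) gchoose Suc m) = ((real m - 1/2) gchoose m) * ((real m + 1/2) / real (Suc m))"
  using gbinomial_rec[of "real m - 1/2" m] by (simp add: algebra_simps)

lemma gbinomial_half_pos: "0 < ((real m - 1/2) gchoose m)"
proof (induction m)
  case (Suc m)
  have "0 < (real m + 1/2) / real (Suc m)" by simp
  with Suc show ?case
    by (simp only: gbinomial_half_Suc) (rule mult_pos_pos)
qed simp

lemma sqrt_coeff_Suc_nonpos: "sqrt_coeff (Suc m) \<le> 0"
proof -
  define G where "G = ((real m - 1/2) gchoose m)"
  have "sqrt_coeff (Suc m) = ((real (Suc m) - 1/2) gchoose Suc m) - G"
    using sum_sqrt_coeff[of "Suc m"] sum_sqrt_coeff[of m] by (simp add: G_def)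
  also have "\<dots> = G * ((real m + 1/2) / real (Suc m)) - G * 1"
    by (simp only: gbinomial_half_Suc G_def mult_1_right)
  also have "\<dots> \<le> 0"
  proof -
    have "G * ((real m + 1/2) / real (Suc m)) \<le> G * 1"
      using gbinomial_half_pos[of m] by (intro mult_left_mono) (simp_all add: G_def)
    then show ?thesis by linarith
  qed
  finally show ?thesis .
qed

lemma summable_abs_sqrt_coeff: "summable (\<lambda>k. \<bar>sqrt_coeff k\<bar>)"
proof (rule bounded_imp_summable[where B=2])
  have "(\<Sum>k\<le>m. \<bar>sqrt_coeff k\<bar>) = 2 - ((real m - 1/2) gchoose m)" for m
  proof (induction m)
    case (Suc m)
    then show ?case
      using sqrt_coeff_Suc_nonpos[of m] sum_sqrt_coeff[of m] sum_sqrt_coeff[of "Suc m"] by simp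
  qed (simp add: sqrt_coeff_def)
  then show "(\<Sum>k\<le>m. \<bar>sqrt_coeff k\<bar>) \<le> 2" for m
    using gbinomial_half_pos[of m] by simp
qed simp

lemma summable_sqrt_coeff: "summable sqrt_coeff"
  using summable_abs_sqrt_coeff by (rule summable_rabs_cancel)

lemma suminf_sqrt_coeff_nonneg: "0 \<le> suminf sqrt_coeff"
  by (rule LIMSEQ_le_const[OF summable_LIMSEQ'[OF summable_sqrt_coeff]])
    (auto simp: sum_sqrt_coeff gbinomial_half_pos less_imp_le)

lemma summable_product_abs:
  fixes a b :: "nat \<Rightarrow> real"
  assumes a: "summable (\<lambda>i. \<bar>a i\<bar>)" and b: "summable (\<lambda>j. \<bar>b j\<bar>)"
  shows "(\<lambda>x. norm ((\<lambda>(i, j). \<bar>a i\<bar> * \<bar>b j\<bar>) x)) summable_on (UNIV \<times> UNIV)"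
proof (rule Infinite_Sum.abs_summable_on_Sigma_iff[THEN iffD2], intro conjI ballI)
  fix i :: nat
  show "(\<lambda>j. norm ((\<lambda>(i, j). \<bar>a i\<bar> * \<bar>b j\<bar>) (i, j))) summable_on UNIV"
    using summable_mult[OF b, of "\<bar>a i\<bar>"] by (auto intro: norm_summable_imp_summable_on simp: abs_mult)
next
  have "(\<Sum>\<^sub>\<infinity>j. norm (\<bar>a i\<bar> * \<bar>b j\<bar>)) = \<bar>a i\<bar> * (\<Sum>j. \<bar>b j\<bar>)" for i
  proof (rule infsumI)
    have "(\<lambda>j. \<bar>a i\<bar> * \<bar>b j\<bar>) sums (\<bar>a i\<bar> * (\<Sum>j. \<bar>b j\<bar>))"
      by (intro sums_mult summable_sums[OF b])
    then show "((\<lambda>j. norm (\<bar>a i\<bar> * \<bar>b j\<bar>)) has_sum \<bar>a i\<bar> * (\<Sum>j. \<bar>b j\<bar>)) UNIV"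
      by (intro norm_summable_imp_has_sum) (auto simp: abs_mult dest: sums_summable)
  qed
  then show "(\<lambda>i. norm (\<Sum>\<^sub>\<infinity>j\<in>UNIV. norm ((\<lambda>(i, j). \<bar>a i\<bar> * \<bar>b j\<bar>) (i, j)))) summable_on UNIV"
    using summable_mult2[OF a] by (auto intro!: norm_summable_imp_summable_on simp: abs_mult)
qed

text \<open>Cauchy product of two absolutely summable real sequences against a bounded sequence of
  vectors, via the double sum over \<open>(i, j)\<close> reindexed by \<open>(i + j, i)\<close>.\<close>

lemma sums_convolution_scaleR:
  fixes a b :: "nat \<Rightarrow> real" and v :: "nat \<Rightarrow> 'a::banach"
  assumes a: "summable (\<lambda>i. \<bar>a i\<bar>)" and b: "summable (\<lambda>j. \<bar>b j\<bar>)"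
    and v: "\<And>n. norm (v n) \<le> M"
  shows "(\<lambda>k. (\<Sum>i\<le>k. a i * b (k - i)) *\<^sub>R v k) sums (\<Sum>i. a i *\<^sub>R (\<Sum>j. b j *\<^sub>R v (i + j)))"
proof -
  define f where "f = (\<lambda>(i, j). (a i * b j) *\<^sub>R v (i + j))"
  define S where "S = infsum f (UNIV \<times> UNIV)"
  have M: "0 \<le> M" using v[of 0] norm_ge_zero order_trans by blast
  have row_norm: "summable (\<lambda>j. norm (b j *\<^sub>R v (i + j)))" for i
    by (rule summable_comparison_test'[OF summable_mult2[OF b, of M], of 0])
      (simp add: mult_left_mono v)
  have row: "((\<lambda>j. f (i, j)) has_sum a i *\<^sub>R (\<Sum>j. b j *\<^sub>R v (i + j))) UNIV" for i
  proof -
    have "((\<lambda>j. b j *\<^sub>R v (i + j)) has_sum (\<Sum>j. b j *\<^sub>R v (i + j))) UNIV"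
      by (rule norm_summable_imp_has_sum[OF row_norm summable_sums[OF summable_norm_cancel[OF row_norm]]])
    from has_sum_scaleR[OF this, of "a i"] show ?thesis
      by (simp add: f_def)
  qed
  have "(\<lambda>x. norm (f x)) summable_on (UNIV \<times> UNIV)"
  proof (rule Infinite_Sum.abs_summable_on_comparison_test)
    show "(\<lambda>x. norm ((\<lambda>(i, j). \<bar>a i\<bar> * \<bar>M * b j\<bar>) x)) summable_on (UNIV \<times> UNIV)"
      using summable_product_abs[OF a, of "\<lambda>j. M * b j"] b by (simp add: abs_mult summable_mult)
    show "norm (f x) \<le> norm ((\<lambda>(i, j). \<bar>a i\<bar> * \<bar>M * b j\<bar>) x)" for x
      using v[of "fst x + snd x"] M
      by (cases x) (simp add: f_def abs_mult mult.assoc mult_left_mono mult.commute[of M])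
  qed
  then have f_sum: "(f has_sum S) (UNIV \<times> UNIV)"
    unfolding S_def using abs_summable_summable has_sum_infsum by blast
  have "(f has_sum S) (UNIV \<times> UNIV) \<longleftrightarrow> ((\<lambda>(k, i). f (i, k - i)) has_sum S) (SIGMA k:UNIV. {..k})"
    by (rule has_sum_reindex_bij_witness[where i="\<lambda>(k, i). (i, k - i)" and j="\<lambda>(i, j). (i + j, i)"])
      (auto simp: split_beta)
  with f_sum have "((\<lambda>(k, i). f (i, k - i)) has_sum S) (SIGMA k:UNIV. {..k})"
    by blast
  then have "((\<lambda>k. \<Sum>i\<le>k. f (i, k - i)) has_sum S) UNIV"
    by (rule has_sum_SigmaD) simp
  moreover have "(\<Sum>i\<le>k. f (i, k - i)) = (\<Sum>i\<le>k. a i * b (k - i)) *\<^sub>R v k" for k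
    by (simp add: f_def scaleR_sum_left)
  ultimately have "(\<lambda>k. (\<Sum>i\<le>k. a i * b (k - i)) *\<^sub>R v k) sums S"
    by (simp add: has_sum_imp_sums)
  moreover have "S = (\<Sum>i. a i *\<^sub>R (\<Sum>j. b j *\<^sub>R v (i + j)))"
    using sums_unique[OF has_sum_imp_sums[OF has_sum_SigmaD[OF f_sum row]]] by simp
  ultimately show ?thesis
    by simp
qed

locale selfadjoint_contraction =
  fixes K :: "'a::chilbert_space \<Rightarrow> 'a"
  assumes bounded_linear: "bounded_linear K"
    and cscale: "K (cscale a p) = cscale a (K p)"
    and norm_le: "norm (K p) \<le> norm p"
    and selfadjoint: "cinner (K q) p = cinner q (K p)"
begin

lemma bounded_linear_funpow: "bounded_linear (K ^^ n)"
  by (induction n) (auto intro: bounded_linear_ident[unfolded id_def] bounded_linear_compose[OF bounded_linear])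

lemma norm_funpow_le: "norm ((K ^^ n) p) \<le> norm p"
  by (induction n) (auto intro: order_trans[OF norm_le])

lemma funpow_cscale: "(K ^^ n) (cscale a p) = cscale a ((K ^^ n) p)"
  by (induction n) (auto simp: cscale)

lemma funpow_selfadjoint: "cinner ((K ^^ n) q) p = cinner q ((K ^^ n) p)"
proof (induction n arbitrary: p)
  case (Suc n)
  have "cinner ((K ^^ Suc n) q) p = cinner ((K ^^ n) q) (K p)"
    by (simp add: selfadjoint)
  also have "\<dots> = cinner q ((K ^^ Suc n) p)"
    by (simp add: Suc funpow_swap1)
  finally show ?case .
qed simp

definition sqrt_one_minus :: "'a \<Rightarrow> 'a" where
  "sqrt_one_minus p = (\<Sum>n. sqrt_coeff n *\<^sub>R (K ^^ n) p)"

lemma summable_norm_sqrt_series: "summable (\<lambda>n. norm (sqrt_coeff n *\<^sub>R (K ^^ n) p))"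
  by (rule summable_comparison_test'[OF summable_mult2[OF summable_abs_sqrt_coeff, of "norm p"], of 0])
    (simp add: mult_left_mono norm_funpow_le)

lemma summable_sqrt_series: "summable (\<lambda>n. sqrt_coeff n *\<^sub>R (K ^^ n) p)"
  by (rule summable_norm_cancel[OF summable_norm_sqrt_series])

lemma bounded_linear_sqrt_one_minus: "bounded_linear sqrt_one_minus"
proof (rule bounded_linear_intro[where K="\<Sum>n. \<bar>sqrt_coeff n\<bar>"])
  fix p q :: 'a and r :: real
  show "sqrt_one_minus (p + q) = sqrt_one_minus p + sqrt_one_minus q"
    unfolding sqrt_one_minus_def
    by (simp add: suminf_add[OF summable_sqrt_series summable_sqrt_series]
        linear_add[OF bounded_linear.linear[OF bounded_linear_funpow]] scaleR_add_right)
  show "sqrt_one_minus (r *\<^sub>R p) = r *\<^sub>R sqrt_one_minus p"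
    unfolding sqrt_one_minus_def
    by (simp add: suminf_scaleR_right[OF summable_sqrt_series]
        linear_scale[OF bounded_linear.linear[OF bounded_linear_funpow]] mult.commute)
  have "norm (sqrt_one_minus p) \<le> (\<Sum>n. norm (sqrt_coeff n *\<^sub>R (K ^^ n) p))"
    unfolding sqrt_one_minus_def by (rule summable_norm[OF summable_norm_sqrt_series])
  also have "\<dots> \<le> (\<Sum>n. \<bar>sqrt_coeff n\<bar> * norm p)"
    by (intro suminf_le summable_norm_sqrt_series summable_mult2 summable_abs_sqrt_coeff)
      (simp add: mult_left_mono norm_funpow_le)
  finally show "norm (sqrt_one_minus p) \<le> norm p * (\<Sum>n. \<bar>sqrt_coeff n\<bar>)"
    by (simp add: suminf_mult2[OF summable_abs_sqrt_coeff, symmetric] mult.commute[of "norm p"])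
qed

lemma sqrt_one_minus_cscale: "sqrt_one_minus (cscale a p) = cscale a (sqrt_one_minus p)"
  unfolding sqrt_one_minus_def
  by (simp add: funpow_cscale cscale_scaleR bounded_linear.suminf[OF bounded_linear_cscale summable_sqrt_series])

lemma sqrt_one_minus_squared: "sqrt_one_minus (sqrt_one_minus p) = p - K p"
proof -
  have "(K ^^ i) (sqrt_one_minus p) = (\<Sum>j. sqrt_coeff j *\<^sub>R (K ^^ (i + j)) p)" for i
    unfolding sqrt_one_minus_def bounded_linear.suminf[OF bounded_linear_funpow summable_sqrt_series]
    by (simp add: linear_scale[OF bounded_linear.linear[OF bounded_linear_funpow]] funpow_add)
  then have eq: "sqrt_one_minus (sqrt_one_minus p)
      = (\<Sum>i. sqrt_coeff i *\<^sub>R (\<Sum>j. sqrt_coeff j *\<^sub>R (K ^^ (i + j)) p))"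
    unfolding sqrt_one_minus_def[of "sqrt_one_minus p"] by simp
  have conv: "(\<lambda>k. (\<Sum>i\<le>k. sqrt_coeff i * sqrt_coeff (k - i)) *\<^sub>R (K ^^ k) p) sums
      (\<Sum>i. sqrt_coeff i *\<^sub>R (\<Sum>j. sqrt_coeff j *\<^sub>R (K ^^ (i + j)) p))"
    by (rule sums_convolution_scaleR[OF summable_abs_sqrt_coeff summable_abs_sqrt_coeff norm_funpow_le])
  have "(\<lambda>k. (\<Sum>i\<le>k. sqrt_coeff i * sqrt_coeff (k - i)) *\<^sub>R (K ^^ k) p) sums (p - K p)"
  proof -
    have "(\<lambda>k. (\<Sum>i\<le>k. sqrt_coeff i * sqrt_coeff (k - i)) *\<^sub>R (K ^^ k) p) sums
        (\<Sum>k\<in>{0, 1}. (\<Sum>i\<le>k. sqrt_coeff i * sqrt_coeff (k - i)) *\<^sub>R (K ^^ k) p)"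
      by (rule sums_finite) (auto simp: sqrt_coeff_convolution)
    then show ?thesis
      by (simp add: sqrt_coeff_convolution)
  qed
  with eq sums_unique2[OF conv] show ?thesis
    by simp
qed

lemma sqrt_one_minus_nonneg: "\<exists>r\<ge>0. cinner p (sqrt_one_minus p) = complex_of_real r"
proof -
  define t where "t n = Re (cinner p ((K ^^ n) p))" for n
  have real: "cinner p ((K ^^ n) p) = complex_of_real (t n)" for n
    using funpow_selfadjoint[of n p p] cinner_commute[of p "(K ^^ n) p"]
    by (simp add: t_def complex_eq_iff)
  have t_le: "\<bar>t n\<bar> \<le> (norm p)\<^sup>2" for n
  proof -
    have "\<bar>t n\<bar> \<le> norm p * norm ((K ^^ n) p)"
      unfolding t_def using abs_Re_le_cmod norm_cinner_le order_trans by blast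
    also have "\<dots> \<le> (norm p)\<^sup>2"
      by (simp add: power2_eq_square mult_left_mono norm_funpow_le)
    finally show ?thesis .
  qed
  have summable: "summable (\<lambda>n. sqrt_coeff n * t n)"
    by (rule summable_comparison_test'[OF summable_mult2[OF summable_abs_sqrt_coeff, of "(norm p)\<^sup>2"], of 0])
      (simp add: abs_mult mult_left_mono t_le)
  have "cinner p (sqrt_one_minus p) = (\<Sum>n. complex_of_real (sqrt_coeff n * t n))"
    unfolding sqrt_one_minus_def
    by (simp add: bounded_linear.suminf[OF bounded_linear_cinner_right summable_sqrt_series]
        cinner_scaleR_right real)
  also have "\<dots> = complex_of_real (\<Sum>n. sqrt_coeff n * t n)"
    by (rule suminf_of_real[OF summable, symmetric])
  finally have eq: "cinner p (sqrt_one_minus p) = complex_of_real (\<Sum>n. sqrt_coeff n * t n)" .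
  \<comment> \<open>since \<open>t 0 = \<parallel>p\<parallel>\<^sup>2\<close> and \<open>sqrt_coeff (Suc n) \<le> 0\<close>, the series dominates \<open>(\<Sum>n. sqrt_coeff n) \<parallel>p\<parallel>\<^sup>2 \<ge> 0\<close>\<close>
  have "suminf sqrt_coeff * (norm p)\<^sup>2 \<le> (\<Sum>n. sqrt_coeff n * t n)"
    unfolding suminf_mult2[OF summable_sqrt_coeff]
  proof (rule suminf_le)
    show "sqrt_coeff n * (norm p)\<^sup>2 \<le> sqrt_coeff n * t n" for n
    proof (cases n)
      case 0 then show ?thesis by (simp add: t_def Re_cinner_self)
    next
      case (Suc m)
      then show ?thesis
        using t_le[of n] sqrt_coeff_Suc_nonpos[of m] by (intro mult_left_mono_neg) auto
    qed
  qed (auto intro: summable_mult2 summable_sqrt_coeff summable)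
  with suminf_sqrt_coeff_nonneg have "0 \<le> (\<Sum>n. sqrt_coeff n * t n)"
    by (meson order_trans zero_le_mult_iff zero_le_power2)
  with eq show ?thesis by blast
qed

lemma positive_operator_sqrt_one_minus: "positive_operator sqrt_one_minus"
  unfolding positive_operator_def
  using bounded_linear_sqrt_one_minus sqrt_one_minus_cscale sqrt_one_minus_nonneg by blast

lemma commute_sqrt_one_minus:
  assumes "bounded_linear S" and S_sq: "\<And>p. S (S p) = p - K p"
  shows "S (sqrt_one_minus p) = sqrt_one_minus (S p)"
proof -
  interpret S: bounded_linear S by fact
  have "S (K p) = K (S p)" for p
  proof -
    have "K p = p - S (S p)"
      using S_sq[of p] by simp
    then have "S (K p) = S p - S (S (S p))"
      by (simp add: S.diff)
    also have "\<dots> = K (S p)"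
      using S_sq[of "S p"] by simp
    finally show ?thesis .
  qed
  then have "S ((K ^^ n) p) = (K ^^ n) (S p)" for n p
    by (induction n arbitrary: p) simp_all
  then show ?thesis
    unfolding sqrt_one_minus_def by (simp add: S.suminf[OF summable_sqrt_series] S.scaleR)
qed

text \<open>Uniqueness: for a second positive root \<open>S\<close>, \<open>y = \<surd>(I-K) x - S x\<close> satisfies
  \<open>(\<surd>(I-K) + S) y = 0\<close>, which forces both positive operators to vanish at \<open>y\<close>.\<close>

lemma positive_sqrt_unique:
  assumes S: "positive_operator S" and S_sq: "\<And>p. S (S p) = p - K p"
  shows "S = sqrt_one_minus"
proof
  fix x
  interpret S: bounded_linear S using S by (simp add: positive_operator_def)
  interpret R: bounded_linear sqrt_one_minus by (rule bounded_linear_sqrt_one_minus)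
  define y where "y = sqrt_one_minus x - S x"
  have "sqrt_one_minus y + S y = 0"
    using commute_sqrt_one_minus[OF S.bounded_linear_axioms S_sq, of x]
    by (simp add: y_def R.diff S.diff sqrt_one_minus_squared S_sq)
  then have "cinner y (sqrt_one_minus y) + cinner y (S y) = 0"
    using cinner_add_right[of y "sqrt_one_minus y" "S y"] by simp
  with positive_operator_nonneg[OF positive_operator_sqrt_one_minus, of y] positive_operator_nonneg[OF S, of y]
  have "cinner y (sqrt_one_minus y) = 0" "cinner y (S y) = 0"
    by (auto simp: complex_eq_iff)
  then have zero: "sqrt_one_minus y = 0" "S y = 0"
    using positive_operator_eq_0[OF positive_operator_sqrt_one_minus] positive_operator_eq_0[OF S] by auto
  have "cinner y y = cinner y (sqrt_one_minus x) - cinner y (S x)"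
    unfolding y_def by (rule cinner_diff_right)
  also have "\<dots> = cinner (sqrt_one_minus y) x - cinner (S y) x"
    by (simp add: positive_operator_selfadjoint[OF S]
        positive_operator_selfadjoint[OF positive_operator_sqrt_one_minus])
  finally have "y = 0"
    using zero by simp
  then show "S x = sqrt_one_minus x"
    by (simp add: y_def)
qed

end

section \<open>Power series on the disc and the Hardy space\<close>

lemma powser_eq_0_imp_coeff_eq_0:
  fixes c :: "nat \<Rightarrow> complex"
  assumes "\<And>x. norm x < 1 \<Longrightarrow> (\<lambda>n. c n * x ^ n) sums 0"
  shows "c k = 0"
proof -
  have "c k = 0 \<and> (\<forall>x. x \<noteq> 0 \<longrightarrow> norm x < 1 \<longrightarrow> (\<lambda>n. c (n + k) * x ^ n) sums 0)"
  proof (induction k)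
    case 0
    then show ?case using assms[of 0] assms by simp
  next
    case (Suc k)
    then have "c k = 0" by blast
    \<comment> \<open>divide the tail series by \<open>x\<close> and let \<open>x \<rightarrow> 0\<close>\<close>
    have tail: "(\<lambda>n. c (n + Suc k) * x ^ n) sums 0" if x: "x \<noteq> 0" "norm x < 1" for x
    proof -
      have "(\<lambda>n. c (Suc n + k) * x ^ Suc n) sums 0"
        using Suc x \<open>c k = 0\<close> by (subst sums_Suc_iff) simp
      then have "(\<lambda>n. c (n + Suc k) * x ^ n * x * inverse x) sums (0 * inverse x)"
        by (intro sums_mult2) (simp add: mult.assoc mult.commute[of x])
      with x show ?thesis
        by (simp add: mult.assoc)
    qed
    have "((\<lambda>x::complex. 0) \<longlongrightarrow> c (0 + Suc k)) (at 0)"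
      by (rule powser_limit_0_strong[where s=1]) (use tail in auto)
    then have "c (Suc k) = 0"
      using LIM_const_eq by fastforce
    with tail show ?case by blast
  qed
  then show ?thesis by blast
qed

lemma powser_cscale_eq_0_imp_coeffs_eq_0:
  fixes d :: "nat \<Rightarrow> 'a::chilbert_space"
  assumes "\<And>z. cmod z < 1 \<Longrightarrow> (\<lambda>n. cscale (z ^ n) (d n)) sums 0"
  shows "d = (\<lambda>_. 0)"
proof
  fix k
  have "(\<lambda>n. cinner (d k) (d n) * z ^ n) sums 0" if "norm z < 1" for z
    using bounded_linear.sums[OF bounded_linear_cinner_right assms, of z "d k"] that
    by (simp add: cinner_cscale_right mult.commute)
  then have "cinner (d k) (d k) = 0"
    by (rule powser_eq_0_imp_coeff_eq_0)
  then show "d k = 0" by simp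
qed

lemma powser_cscale_unique:
  fixes a b :: "nat \<Rightarrow> 'a::chilbert_space"
  assumes a: "\<And>z. cmod z < 1 \<Longrightarrow> (\<lambda>n. cscale (z ^ n) (a n)) sums f z"
    and b: "\<And>z. cmod z < 1 \<Longrightarrow> (\<lambda>n. cscale (z ^ n) (b n)) sums f z"
  shows "a = b"
proof -
  have "(\<lambda>n. a n - b n) = (\<lambda>_. 0)"
  proof (rule powser_cscale_eq_0_imp_coeffs_eq_0)
    fix z :: complex assume "cmod z < 1"
    from sums_diff[OF a[OF this] b[OF this]]
    show "(\<lambda>n. cscale (z ^ n) (a n - b n)) sums 0" by (simp add: cscale_diff_right)
  qed
  then show ?thesis by (simp add: fun_eq_iff)
qed

lemma h2_coeffs_eq:
  assumes "\<And>z. cmod z < 1 \<Longrightarrow> (\<lambda>n. cscale (z ^ n) (a n)) sums f z"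
  shows "h2_coeffs f = a"
  unfolding h2_coeffs_def
  by (rule someI2[where a=a]) (use assms powser_cscale_unique[of _ f a] in auto)

lemma H2_E:
  assumes "f \<in> H2"
  obtains a where "summable (\<lambda>n. (norm (a n))\<^sup>2)"
    and "\<And>z. cmod z < 1 \<Longrightarrow> (\<lambda>n. cscale (z ^ n) (a n)) sums f z" and "h2_coeffs f = a"
proof -
  from assms obtain a where a: "summable (\<lambda>n. (norm (a n))\<^sup>2)"
    and "\<forall>z\<in>ball 0 1. (\<lambda>n. cscale (z ^ n) (a n)) sums f z"
    unfolding H2_def by blast
  then have sums: "\<And>z. cmod z < 1 \<Longrightarrow> (\<lambda>n. cscale (z ^ n) (a n)) sums f z"
    by simp
  show thesis
    by (rule that[OF a sums h2_coeffs_eq[OF sums]])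
qed

lemma H2_I:
  assumes "summable (\<lambda>n. (norm (a n))\<^sup>2)" and "\<And>z. cmod z < 1 \<Longrightarrow> (\<lambda>n. cscale (z ^ n) (a n)) sums f z"
  shows "f \<in> H2"
  using assms unfolding H2_def by auto

lemma monomial_in_H2: "(\<lambda>z. cscale (z ^ m) y) \<in> H2"
  and h2_coeffs_monomial: "h2_coeffs (\<lambda>z. cscale (z ^ m) y) = (\<lambda>n. if n = m then y else 0)"
proof -
  have "(\<lambda>n. cscale (z ^ n) (if n = m then y else 0)) = (\<lambda>n. if n = m then cscale (z ^ n) y else 0)" for z
    by auto
  then have "(\<lambda>n. cscale (z ^ n) (if n = m then y else 0)) sums cscale (z ^ m) y" for z
    using sums_single[of m "\<lambda>n. cscale (z ^ n) y"] by simp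
  moreover have "(\<lambda>n. (norm (if n = m then y else 0))\<^sup>2) = (\<lambda>n. if n = m then (norm y)\<^sup>2 else 0)"
    by auto
  then have "summable (\<lambda>n. (norm (if n = m then y else 0))\<^sup>2)"
    using sums_single[of m "\<lambda>_. (norm y)\<^sup>2"] sums_summable by metis
  ultimately show "(\<lambda>z. cscale (z ^ m) y) \<in> H2" "h2_coeffs (\<lambda>z. cscale (z ^ m) y) = (\<lambda>n. if n = m then y else 0)"
    by (auto intro: H2_I h2_coeffs_eq)
qed

lemma h2_inner_monomial_right:
  "h2_inner f (\<lambda>z. cscale (z ^ m) y) = cinner (h2_coeffs f m) y"
proof -
  have "(\<lambda>n. cinner (h2_coeffs f n) (if n = m then y else 0)) = (\<lambda>n. if n = m then cinner (h2_coeffs f n) y else 0)"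
    by auto
  then show ?thesis
    unfolding h2_inner_def h2_coeffs_monomial
    using sums_single[of m "\<lambda>n. cinner (h2_coeffs f n) y"] by (simp add: sums_iff)
qed

section \<open>The contraction \<open>\<omega>\<close> and its defect operator\<close>

locale subspace_contraction =
  fixes F :: "'u::chilbert_space set" and w1 :: "'u \<Rightarrow> 'y::chilbert_space" and w2 :: "'u \<Rightarrow> 'u"
  assumes subspace: "closed_csubspace F" and contraction: "contraction_on F w1 w2"
begin

lemma w1_add: "x \<in> F \<Longrightarrow> y \<in> F \<Longrightarrow> w1 (x + y) = w1 x + w1 y"
  and w2_add: "x \<in> F \<Longrightarrow> y \<in> F \<Longrightarrow> w2 (x + y) = w2 x + w2 y"
  and w1_cscale: "x \<in> F \<Longrightarrow> w1 (cscale a x) = cscale a (w1 x)"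
  and w2_cscale: "x \<in> F \<Longrightarrow> w2 (cscale a x) = cscale a (w2 x)"
  and norm_w_sq_le: "x \<in> F \<Longrightarrow> (norm (w1 x))\<^sup>2 + (norm (w2 x))\<^sup>2 \<le> (norm x)\<^sup>2"
  using contraction by (simp_all add: contraction_on_def)

lemma norm_w1_le: "x \<in> F \<Longrightarrow> norm (w1 x) \<le> norm x"
  and norm_w2_le: "x \<in> F \<Longrightarrow> norm (w2 x) \<le> norm x"
proof -
  assume "x \<in> F"
  then have "(norm (w1 x))\<^sup>2 \<le> (norm x)\<^sup>2" "(norm (w2 x))\<^sup>2 \<le> (norm x)\<^sup>2"
    using norm_w_sq_le[of x] zero_le_power2[of "norm (w1 x)"] zero_le_power2[of "norm (w2 x)"]
    by linarith+
  then show "norm (w1 x) \<le> norm x" "norm (w2 x) \<le> norm x"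
    using power2_le_imp_le norm_ge_zero by blast+
qed

lemma norm_w_Pair_le: "x \<in> F \<Longrightarrow> norm (w1 x, w2 x) \<le> norm x"
  using norm_w_sq_le[of x] by (simp add: norm_Pair real_le_lsqrt)

abbreviation "P \<equiv> proj F"

abbreviation "Wadj \<equiv> omega_adj F w1 w2"

lemma omega_adj_ex1: "\<exists>!f. f \<in> F \<and> (\<forall>g\<in>F. cinner g f = cinner (w1 g) (fst p) + cinner (w2 g) (snd p))"
proof -
  interpret bounded_antilinear_on F "\<lambda>g. cinner (w1 g, w2 g) p" "norm p"
  proof
    fix g h a assume "g \<in> F" "h \<in> F"
    then show "cinner (w1 (g + h), w2 (g + h)) p = cinner (w1 g, w2 g) p + cinner (w1 h, w2 h) p"
      by (simp add: w1_add w2_add cinner_add_left prod_eq_iff cinner_prod_def)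
    show "cinner (w1 (cscale a g), w2 (cscale a g)) p = cnj a * cinner (w1 g, w2 g) p"
      using \<open>g \<in> F\<close> by (simp add: w1_cscale w2_cscale cinner_cscale_left cinner_prod_def algebra_simps)
    have "cmod (cinner (w1 g, w2 g) p) \<le> norm (w1 g, w2 g) * norm p"
      by (rule norm_cinner_le)
    also have "\<dots> \<le> norm g * norm p"
      using norm_w_Pair_le[OF \<open>g \<in> F\<close>] by (intro mult_right_mono) simp_all
    finally show "cmod (cinner (w1 g, w2 g) p) \<le> norm p * norm g"
      by (simp add: mult.commute)
  qed (rule subspace)
  show ?thesis
    using riesz_representation by (simp add: cinner_prod_def)
qed

lemma omega_adj_in: "Wadj p \<in> F"
  unfolding omega_adj_def using theI'[OF omega_adj_ex1] by blast

lemma cinner_omega_adj: "g \<in> F \<Longrightarrow> cinner g (Wadj p) = cinner (w1 g, w2 g) p"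
  unfolding omega_adj_def using theI'[OF omega_adj_ex1, of p] by (simp add: cinner_prod_def)

lemma omega_adj_unique:
  "f \<in> F \<Longrightarrow> (\<And>g. g \<in> F \<Longrightarrow> cinner g f = cinner (w1 g, w2 g) p) \<Longrightarrow> Wadj p = f"
  unfolding omega_adj_def by (rule the1_equality[OF omega_adj_ex1]) (auto simp: cinner_prod_def)

lemma omega_adj_add: "Wadj (p + q) = Wadj p + Wadj q"
  by (rule omega_adj_unique)
    (simp_all add: closed_csubspace_add[OF subspace] omega_adj_in cinner_add_right cinner_omega_adj)

lemma omega_adj_cscale: "Wadj (cscale a p) = cscale a (Wadj p)"
  by (rule omega_adj_unique)
    (simp_all add: closed_csubspace_cscale[OF subspace] omega_adj_in cinner_cscale_right cinner_omega_adj)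

lemma norm_omega_adj_le: "norm (Wadj p) \<le> norm p"
proof -
  have "(norm (Wadj p))\<^sup>2 = Re (cinner (w1 (Wadj p), w2 (Wadj p)) p)"
    by (simp flip: Re_cinner_self add: cinner_omega_adj omega_adj_in)
  also have "\<dots> \<le> norm (w1 (Wadj p), w2 (Wadj p)) * norm p"
    using complex_Re_le_cmod norm_cinner_le order_trans by blast
  also have "\<dots> \<le> norm (Wadj p) * norm p"
    by (intro mult_right_mono norm_w_Pair_le omega_adj_in) simp
  finally have "norm (Wadj p) * norm (Wadj p) \<le> norm (Wadj p) * norm p"
    by (simp add: power2_eq_square)
  then show ?thesis
    by (cases "Wadj p = 0") simp_all
qed

lemma bounded_linear_omega_adj: "bounded_linear Wadj"
  by (rule bounded_linear_intro[where K=1])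
    (simp_all add: omega_adj_add scaleR_cscale omega_adj_cscale norm_omega_adj_le)

text \<open>With \<open>A = \<omega>\<^sub>2 \<Pi>\<^sub>F\<close> and \<open>C = \<omega>\<^sub>1 \<Pi>\<^sub>F\<close> on \<open>U\<close>, the transfer function is
  \<open>\<Phi>\<^sub>2\<^sub>2(\<lambda>) = C (I - \<lambda> A)\<^sup>-\<^sup>1\<close>; \<open>Kop = \<omega>\<omega>\<^sup>*\<close> on \<open>Y \<oplus> U\<close>.\<close>

definition Aop :: "'u \<Rightarrow> 'u" where "Aop u = w2 (P u)"
definition Cop :: "'u \<Rightarrow> 'y" where "Cop u = w1 (P u)"
definition Aadj :: "'u \<Rightarrow> 'u" where "Aadj u = Wadj (0, u)"
definition Cadj :: "'y \<Rightarrow> 'u" where "Cadj y = Wadj (y, 0)"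
definition Kop :: "'y \<times> 'u \<Rightarrow> 'y \<times> 'u" where "Kop p = (w1 (Wadj p), w2 (Wadj p))"

lemma proj_in_F: "P x \<in> F"
  by (rule proj_in[OF subspace])

lemma bounded_linear_Cop: "bounded_linear Cop"
  unfolding Cop_def
  by (rule bounded_linear_intro[where K=1])
    (auto simp: proj_add[OF subspace] proj_cscale[OF subspace] scaleR_cscale w1_add w1_cscale proj_in_F
      intro: order_trans[OF norm_w1_le[OF proj_in_F] norm_proj_le[OF subspace]])

lemma bounded_linear_Aop: "bounded_linear Aop"
  unfolding Aop_def
  by (rule bounded_linear_intro[where K=1])
    (auto simp: proj_add[OF subspace] proj_cscale[OF subspace] scaleR_cscale w2_add w2_cscale proj_in_F
      intro: order_trans[OF norm_w2_le[OF proj_in_F] norm_proj_le[OF subspace]])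

lemma Cop_cscale: "Cop (cscale a x) = cscale a (Cop x)"
  by (simp add: Cop_def proj_cscale[OF subspace] w1_cscale proj_in_F)

lemma Aop_cscale: "Aop (cscale a x) = cscale a (Aop x)"
  by (simp add: Aop_def proj_cscale[OF subspace] w2_cscale proj_in_F)

lemma norm_Cop_Aop_sq_le: "(norm (Cop x))\<^sup>2 + (norm (Aop x))\<^sup>2 \<le> (norm x)\<^sup>2"
  unfolding Cop_def Aop_def
  by (rule order_trans[OF norm_w_sq_le[OF proj_in_F]])
    (rule power_mono[OF norm_proj_le[OF subspace] norm_ge_zero])

lemma norm_Aop_le: "norm (Aop x) \<le> norm x"
  unfolding Aop_def using norm_w2_le[OF proj_in_F] norm_proj_le[OF subspace] order_trans by blast

lemma cinner_Cop: "cinner (Cop x) y = cinner x (Cadj y)"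
  using cinner_proj_left[OF subspace omega_adj_in, of x "(y, 0)"]
  by (simp add: Cadj_def Cop_def cinner_omega_adj proj_in_F)

lemma cinner_Aop: "cinner (Aop x) u = cinner x (Aadj u)"
  using cinner_proj_left[OF subspace omega_adj_in, of x "(0, u)"]
  by (simp add: Aadj_def Aop_def cinner_omega_adj proj_in_F)

lemma omega_adj_Pair: "Wadj (y, u) = Cadj y + Aadj u"
  using omega_adj_add[of "(y, 0)" "(0, u)"] by (simp add: Cadj_def Aadj_def)

lemma bounded_linear_Aadj: "bounded_linear Aadj"
  unfolding Aadj_def
  by (rule bounded_linear_compose[OF bounded_linear_omega_adj])
    (rule bounded_linear_Pair[OF bounded_linear_zero bounded_linear_ident])

lemma norm_Aadj_le: "norm (Aadj u) \<le> norm u"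
  unfolding Aadj_def using norm_omega_adj_le[of "(0, u)"] by simp

lemma norm_Cadj_le: "norm (Cadj y) \<le> norm y"
  unfolding Cadj_def using norm_omega_adj_le[of "(y, 0)"] by simp

lemma bounded_linear_Kop: "bounded_linear Kop"
  unfolding Kop_def
  by (rule bounded_linear_intro[where K=1])
    (auto simp: omega_adj_add omega_adj_cscale scaleR_cscale w1_add w2_add w1_cscale w2_cscale omega_adj_in
      intro: order_trans[OF norm_w_Pair_le[OF omega_adj_in] norm_omega_adj_le])

lemma Kop_cscale: "Kop (cscale a p) = cscale a (Kop p)"
  by (simp add: Kop_def omega_adj_cscale w1_cscale w2_cscale omega_adj_in)

lemma norm_Kop_le: "norm (Kop p) \<le> norm p"
  unfolding Kop_def by (rule order_trans[OF norm_w_Pair_le[OF omega_adj_in] norm_omega_adj_le])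

lemma cinner_Kop_left: "cinner (Kop p) q = cinner (Wadj p) (Wadj q)"
  unfolding Kop_def by (rule cinner_omega_adj[OF omega_adj_in, symmetric])

lemma Kop_selfadjoint: "cinner (Kop q) p = cinner q (Kop p)"
  using cinner_Kop_left[of p q] cinner_commute[of q "Kop p"] cinner_commute[of "Wadj p"]
  by (simp add: cinner_Kop_left)

sublocale K: selfadjoint_contraction Kop
  by (rule selfadjoint_contraction.intro) (fact bounded_linear_Kop Kop_cscale norm_Kop_le Kop_selfadjoint)+

abbreviation "D \<equiv> Dstar F w1 w2"

lemma Dstar_eq_sqrt_one_minus: "D = K.sqrt_one_minus"
  unfolding Dstar_def Kop_def[symmetric]
proof (rule the_equality)
  show "positive_op K.sqrt_one_minus \<and> (\<forall>p. K.sqrt_one_minus (K.sqrt_one_minus p) = p - Kop p)"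
    by (simp add: positive_op_iff_positive_operator K.positive_operator_sqrt_one_minus K.sqrt_one_minus_squared)
next
  fix S assume S: "positive_op S \<and> (\<forall>p. S (S p) = p - Kop p)"
  then show "S = K.sqrt_one_minus"
    by (intro K.positive_sqrt_unique) (use S positive_op_iff_positive_operator in blast)+
qed

lemma positive_operator_D: "positive_operator D"
  by (simp add: Dstar_eq_sqrt_one_minus K.positive_operator_sqrt_one_minus)

lemma bounded_linear_D: "bounded_linear D"
  using positive_operator_D by (simp add: positive_operator_def)

lemma D_squared: "D (D p) = p - Kop p"
  by (simp add: Dstar_eq_sqrt_one_minus K.sqrt_one_minus_squared)

lemma norm_omega_adj_sq_add_norm_D_sq: "(norm (Wadj p))\<^sup>2 + (norm (D p))\<^sup>2 = (norm p)\<^sup>2"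
proof -
  have "(norm (D p))\<^sup>2 = Re (cinner p (D (D p)))"
    using positive_operator_selfadjoint[OF positive_operator_D, of p "D p"] by (simp add: Re_cinner_self)
  also have "\<dots> = (norm p)\<^sup>2 - (norm (Wadj p))\<^sup>2"
    by (simp add: D_squared cinner_diff_right Kop_selfadjoint[symmetric] cinner_Kop_left Re_cinner_self)
  finally show ?thesis by simp
qed

end

section \<open>The transfer function \<open>\<Phi>\<^sub>2\<^sub>2\<close> and the adjoint of \<open>\<Gamma>\<^sub>\<Phi>\<^sub>2\<^sub>2\<close>\<close>

context subspace_contraction
begin

lemma norm_Aop_funpow_le: "norm ((Aop ^^ n) u) \<le> norm u"
  by (induction n) (auto intro: order_trans[OF norm_Aop_le])

lemma norm_Aadj_funpow_le: "norm ((Aadj ^^ n) u) \<le> norm u"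
  by (induction n) (auto intro: order_trans[OF norm_Aadj_le])

lemma norm_Aadj_funpow_Cadj_le: "norm ((Aadj ^^ n) (Cadj y)) \<le> norm y"
  using norm_Aadj_funpow_le norm_Cadj_le order_trans by blast

lemma bounded_linear_Aadj_funpow: "bounded_linear (Aadj ^^ n)"
  by (induction n) (auto intro: bounded_linear_ident[unfolded id_def] bounded_linear_compose[OF bounded_linear_Aadj])

lemma cinner_Aop_funpow: "cinner ((Aop ^^ n) x) u = cinner x ((Aadj ^^ n) u)"
proof (induction n arbitrary: u)
  case (Suc n)
  have "cinner ((Aop ^^ Suc n) x) u = cinner ((Aop ^^ n) x) (Aadj u)"
    by (simp add: cinner_Aop)
  also have "\<dots> = cinner x ((Aadj ^^ Suc n) u)"
    by (simp add: Suc funpow_swap1)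
  finally show ?case .
qed simp

lemma cinner_Cop_Aop_funpow: "cinner (Cop ((Aop ^^ n) x)) y = cinner x ((Aadj ^^ n) (Cadj y))"
  by (simp add: cinner_Cop cinner_Aop_funpow)

lemma summable_norm_Aop_funpow: "cmod z < 1 \<Longrightarrow> summable (\<lambda>n. norm (cscale (z ^ n) ((Aop ^^ n) u)))"
  by (rule summable_comparison_test'[OF summable_mult2[OF summable_geometric, of "cmod z" "norm u"], of 0])
    (simp_all add: norm_cscale norm_power mult_left_mono norm_Aop_funpow_le)

text \<open>Since \<open>\<parallel>z A\<parallel> < 1\<close>, the map \<open>I - z A\<close> is injective, so the \<open>inv\<close> in \<open>resolv\<close> is a
  genuine inverse and \<open>resolv\<close> is given by the Neumann series.\<close>

lemma inj_resolvent_map: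
  assumes z: "cmod z < 1"
  shows "inj (\<lambda>x. x - cscale z (Aop x))"
proof (rule injI)
  fix x y assume "x - cscale z (Aop x) = y - cscale z (Aop y)"
  then have "x - y = cscale z (Aop x) - cscale z (Aop y)"
    by (simp add: algebra_simps)
  also have "\<dots> = cscale z (Aop (x - y))"
    by (simp add: cscale_diff_right linear_diff[OF bounded_linear.linear[OF bounded_linear_Aop]])
  finally have "norm (x - y) = cmod z * norm (Aop (x - y))"
    by (metis norm_cscale)
  also have "\<dots> \<le> cmod z * norm (x - y)"
    by (intro mult_left_mono norm_Aop_le) simp
  finally have "(1 - cmod z) * norm (x - y) \<le> 0"
    by (simp add: algebra_simps)
  with z show "x = y"
    by (simp add: mult_le_0_iff)
qed

lemma resolv_sums:
  assumes z: "cmod z < 1"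
  shows "(\<lambda>n. cscale (z ^ n) ((Aop ^^ n) u)) sums resolv F w2 z u"
proof -
  let ?T = "\<lambda>x. x - cscale z (w2 (P x))"
  have summable: "summable (\<lambda>n. cscale (z ^ n) ((Aop ^^ n) u))"
    by (rule summable_norm_cancel[OF summable_norm_Aop_funpow[OF z]])
  define N where "N = (\<Sum>n. cscale (z ^ n) ((Aop ^^ n) u))"
  have "cscale z (Aop N) = (\<Sum>n. cscale (z ^ Suc n) ((Aop ^^ Suc n) u))"
    unfolding N_def
    by (simp add: bounded_linear.suminf[OF bounded_linear_compose[OF bounded_linear_cscale bounded_linear_Aop] summable]
        Aop_cscale cscale_cscale mult.commute)
  also have "\<dots> = N - u"
    unfolding N_def using suminf_split_head[OF summable] by (simp add: cscale_one)
  finally have "?T N = u"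
    by (simp add: Aop_def)
  moreover have "inj ?T"
    using inj_resolvent_map[OF z] by (simp add: Aop_def)
  ultimately have "resolv F w2 z u = N"
    unfolding resolv_def using inv_f_f by fastforce
  with summable show ?thesis
    by (simp add: N_def summable_sums)
qed

lemma Phi22_sums:
  "cmod z < 1 \<Longrightarrow> (\<lambda>n. cscale (z ^ n) (Cop ((Aop ^^ n) u))) sums Phi22 F w1 w2 z u"
  using bounded_linear.sums[OF bounded_linear_Cop resolv_sums]
  by (simp add: Phi22_def Cop_def Cop_cscale[unfolded Cop_def])

lemma summable_norm_Cop_Aop_funpow_sq: "summable (\<lambda>n. (norm (Cop ((Aop ^^ n) u)))\<^sup>2)"
proof (rule summableI_nonneg_bounded[where x="(norm u)\<^sup>2"])
  have bound: "(\<Sum>n<N. (norm (Cop ((Aop ^^ n) u)))\<^sup>2) + (norm ((Aop ^^ N) u))\<^sup>2 \<le> (norm u)\<^sup>2" for N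
  proof (induction N)
    case (Suc N)
    then show ?case
      using norm_Cop_Aop_sq_le[of "(Aop ^^ N) u"] by simp
  qed simp
  then show "(\<Sum>n<N. (norm (Cop ((Aop ^^ n) u)))\<^sup>2) \<le> (norm u)\<^sup>2" for N
    using bound[of N] zero_le_power2[of "norm ((Aop ^^ N) u)"] by linarith
qed simp

lemma Phi22_in_H2: "(\<lambda>z. Phi22 F w1 w2 z u) \<in> H2"
  using summable_norm_Cop_Aop_funpow_sq Phi22_sums by (rule H2_I)

lemma h2_coeffs_Phi22: "h2_coeffs (\<lambda>z. Phi22 F w1 w2 z u) = (\<lambda>n. Cop ((Aop ^^ n) u))"
  using Phi22_sums by (rule h2_coeffs_eq)

text \<open>\<open>\<omega>\<^sup>*\<close> is a contraction, and \<open>\<omega>\<^sup>*(y, u) = C\<^sup>* y + A\<^sup>* u\<close>; unrolling this gives the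
  bound on the partial sums of \<open>\<Gamma>\<^sup>* v = \<Sum>\<^sub>n A\<^sup>*\<^sup>n C\<^sup>* v\<^sub>n\<close>.\<close>

lemma norm_sum_Aadj_Cadj_sq_le:
  "(norm (\<Sum>n<N. (Aadj ^^ n) (Cadj (v n))))\<^sup>2 \<le> (\<Sum>n<N. (norm (v n))\<^sup>2)"
proof (induction N arbitrary: v)
  case (Suc N)
  define R where "R = (\<Sum>n<N. (Aadj ^^ n) (Cadj (v (Suc n))))"
  have "(\<Sum>n<Suc N. (Aadj ^^ n) (Cadj (v n))) = Cadj (v 0) + Aadj R"
    by (simp add: R_def sum.lessThan_Suc_shift linear_sum[OF bounded_linear.linear[OF bounded_linear_Aadj]]
        del: sum.lessThan_Suc)
  also have "\<dots> = Wadj (v 0, R)"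
    by (simp add: omega_adj_Pair)
  finally have "(norm (\<Sum>n<Suc N. (Aadj ^^ n) (Cadj (v n))))\<^sup>2 \<le> (norm (v 0, R))\<^sup>2"
    using norm_omega_adj_le by (simp add: power_mono)
  also have "\<dots> \<le> (norm (v 0))\<^sup>2 + (\<Sum>n<N. (norm (v (Suc n)))\<^sup>2)"
    using Suc[of "\<lambda>n. v (Suc n)"] by (simp add: R_def norm_Pair)
  finally show ?case
    by (simp add: sum.lessThan_Suc_shift del: sum.lessThan_Suc)
qed simp

lemma summable_Aadj_Cadj:
  assumes v: "summable (\<lambda>n. (norm (v n))\<^sup>2)"
  shows "summable (\<lambda>n. (Aadj ^^ n) (Cadj (v n)))"
  unfolding summable_Cauchy
proof (intro allI impI)
  fix e :: real assume "0 < e"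
  then have "0 < e\<^sup>2" by simp
  from v[unfolded summable_Cauchy, rule_format, OF this] obtain N
    where N: "\<And>m n. m \<ge> N \<Longrightarrow> norm (\<Sum>k\<in>{m..<n}. (norm (v k))\<^sup>2) < e\<^sup>2"
    by blast
  have "norm (\<Sum>k\<in>{m..<n}. (Aadj ^^ k) (Cadj (v k))) < e" if "m \<ge> N" for m n
  proof -
    have "(\<Sum>k\<in>{m..<n}. (Aadj ^^ k) (Cadj (v k))) = (Aadj ^^ m) (\<Sum>j<n - m. (Aadj ^^ j) (Cadj (v (m + j))))"
      by (subst sum.atLeastLessThan_shift_0)
        (simp add: lessThan_atLeast0 funpow_add linear_sum[OF bounded_linear.linear[OF bounded_linear_Aadj_funpow]])
    then have "(norm (\<Sum>k\<in>{m..<n}. (Aadj ^^ k) (Cadj (v k))))\<^sup>2 \<le> (norm (\<Sum>j<n - m. (Aadj ^^ j) (Cadj (v (m + j)))))\<^sup>2"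
      using norm_Aadj_funpow_le by (simp add: power_mono)
    also have "\<dots> \<le> (\<Sum>j<n - m. (norm (v (m + j)))\<^sup>2)"
      by (rule norm_sum_Aadj_Cadj_sq_le)
    also have "\<dots> = (\<Sum>k\<in>{m..<n}. (norm (v k))\<^sup>2)"
      by (subst sum.atLeastLessThan_shift_0) (simp add: lessThan_atLeast0)
    also have "\<dots> < e\<^sup>2"
      using N[OF that, of n] by (simp add: sum_nonneg)
    finally show ?thesis
      using \<open>0 < e\<close> by (simp add: power_less_imp_less_base)
  qed
  then show "\<exists>N. \<forall>m\<ge>N. \<forall>n. norm (\<Sum>k\<in>{m..<n}. (Aadj ^^ k) (Cadj (v k))) < e"
    by blast
qed

definition Gamma_adj :: "(nat \<Rightarrow> 'y) \<Rightarrow> 'u" where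
  "Gamma_adj v = (\<Sum>n. (Aadj ^^ n) (Cadj (v n)))"

lemma cinner_Gamma_adj_sums:
  assumes "summable (\<lambda>n. (norm (v n))\<^sup>2)"
  shows "(\<lambda>n. cinner (Cop ((Aop ^^ n) u)) (v n)) sums cinner u (Gamma_adj v)"
  unfolding Gamma_adj_def cinner_Cop_Aop_funpow
  by (rule bounded_linear.sums[OF bounded_linear_cinner_right summable_sums[OF summable_Aadj_Cadj[OF assms]]])

lemma Gamma_adj_eq_omega_adj:
  assumes v: "summable (\<lambda>n. (norm (v n))\<^sup>2)"
  shows "Gamma_adj v = Wadj (v 0, Gamma_adj (\<lambda>n. v (Suc n)))"
proof -
  have v': "summable (\<lambda>n. (norm (v (Suc n)))\<^sup>2)"
    using summable_ignore_initial_segment[OF v, of 1] by simp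
  have "Gamma_adj v = Cadj (v 0) + (\<Sum>n. Aadj ((Aadj ^^ n) (Cadj (v (Suc n)))))"
    unfolding Gamma_adj_def using suminf_split_head[OF summable_Aadj_Cadj[OF v]]
    by (simp add: funpow_swap1)
  also have "(\<Sum>n. Aadj ((Aadj ^^ n) (Cadj (v (Suc n))))) = Aadj (Gamma_adj (\<lambda>n. v (Suc n)))"
    unfolding Gamma_adj_def
    by (rule bounded_linear.suminf[OF bounded_linear_Aadj summable_Aadj_Cadj[OF v'], symmetric])
  finally show ?thesis
    by (simp add: omega_adj_Pair)
qed

end

section \<open>Both sides are equivalent to the vanishing of the defect on the orbits\<close>

context subspace_contraction
begin

text \<open>The coefficients of \<open>w \<mapsto> D\<^sub>\<omega>\<^sub>* (y, w \<Sum>\<^sub>n w\<^sup>n A\<^sup>*\<^sup>n C\<^sup>* y)\<close>. The condition that they all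
  vanish is the common reformulation of both sides of the theorem.\<close>

definition defect_coeff :: "'y \<Rightarrow> nat \<Rightarrow> 'y \<times> 'u" where
  "defect_coeff y n = (case n of 0 \<Rightarrow> D (y, 0) | Suc k \<Rightarrow> D (0, (Aadj ^^ k) (Cadj y)))"

definition defect_condition :: bool where
  "defect_condition \<longleftrightarrow> (\<forall>y n. defect_coeff y n = 0)"

lemma defect_condition_iff:
  "defect_condition \<longleftrightarrow> (\<forall>y. D (y, 0) = 0) \<and> (\<forall>n y. D (0, (Aadj ^^ n) (Cadj y)) = 0)"
  unfolding defect_condition_def defect_coeff_def by (auto split: nat.splits)

lemma D_Pair: "D (y, u) = D (y, 0) + D (0, u)"
  using linear_add[OF bounded_linear.linear[OF bounded_linear_D], of "(y, 0)" "(0, u)"] by simp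

lemma D_snd_cscale: "D (0, cscale a u) = cscale a (D (0, u))"
  using positive_operator_cscale[OF positive_operator_D, of a "(0, u)"] by simp

lemma bounded_linear_D_snd: "bounded_linear (\<lambda>u. D (0, u))"
  by (rule bounded_linear_compose[OF bounded_linear_D bounded_linear_Pair[OF bounded_linear_zero bounded_linear_ident]])

lemma D_Gamma_adj:
  assumes defect_condition and v: "summable (\<lambda>n. (norm (v n))\<^sup>2)"
  shows "D (0, Gamma_adj v) = 0"
proof -
  have "D (0, Gamma_adj v) = (\<Sum>n. D (0, (Aadj ^^ n) (Cadj (v n))))"
    unfolding Gamma_adj_def by (rule bounded_linear.suminf[OF bounded_linear_D_snd summable_Aadj_Cadj[OF v]])
  also have "\<dots> = 0"
    using \<open>defect_condition\<close> by (simp add: defect_condition_iff)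
  finally show ?thesis .
qed

text \<open>If \<open>D\<^sub>\<omega>\<^sub>* p = 0\<close> then \<open>\<omega>\<omega>\<^sup>* p = p\<close>; applied to \<open>p = (v\<^sub>0, \<Gamma>\<^sup>* (shifted v))\<close> this shows
  that \<open>\<Gamma>\<^sup>*\<close> is a right inverse of \<open>\<Gamma>\<close>, one coefficient at a time.\<close>

lemma Gamma_adj_shift:
  assumes defect_condition and v: "summable (\<lambda>n. (norm (v n))\<^sup>2)"
  shows "Cop (Gamma_adj v) = v 0" and "Aop (Gamma_adj v) = Gamma_adj (\<lambda>n. v (Suc n))"
proof -
  define p where "p = (v 0, Gamma_adj (\<lambda>n. v (Suc n)))"
  have v': "summable (\<lambda>n. (norm (v (Suc n)))\<^sup>2)"
    using summable_ignore_initial_segment[OF v, of 1] by simp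
  have "D p = 0"
    using \<open>defect_condition\<close> D_Gamma_adj[OF \<open>defect_condition\<close> v'] D_Pair[of "v 0" "Gamma_adj (\<lambda>n. v (Suc n))"]
    by (simp add: p_def defect_condition_iff)
  then have "p = Kop p"
    using D_squared[of p] linear_0[OF bounded_linear.linear[OF bounded_linear_D]] by simp
  moreover have "Wadj p = Gamma_adj v"
    using Gamma_adj_eq_omega_adj[OF v] by (simp add: p_def)
  ultimately have "w1 (Gamma_adj v) = v 0" "w2 (Gamma_adj v) = Gamma_adj (\<lambda>n. v (Suc n))"
    by (simp_all add: Kop_def p_def prod_eq_iff)
  moreover have "P (Gamma_adj v) = Gamma_adj v"
    using omega_adj_in[of p] \<open>Wadj p = Gamma_adj v\<close> by (simp add: proj_id[OF subspace])
  ultimately show "Cop (Gamma_adj v) = v 0" "Aop (Gamma_adj v) = Gamma_adj (\<lambda>n. v (Suc n))"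
    by (simp_all add: Cop_def Aop_def)
qed

lemma Cop_Aop_funpow_Gamma_adj:
  assumes defect_condition and v: "summable (\<lambda>n. (norm (v n))\<^sup>2)"
  shows "Cop ((Aop ^^ n) (Gamma_adj v)) = v n"
proof -
  have "(Aop ^^ n) (Gamma_adj v) = Gamma_adj (\<lambda>k. v (k + n))"
  proof (induction n)
    case (Suc n)
    then show ?case
      using Gamma_adj_shift(2)[OF \<open>defect_condition\<close> summable_ignore_initial_segment[OF v, of n]] by simp
  qed simp
  then show ?thesis
    using Gamma_adj_shift(1)[OF \<open>defect_condition\<close> summable_ignore_initial_segment[OF v, of n]] by simp
qed

lemma coisometry_if_defect_condition:
  assumes defect_condition
  shows "h2_coisometry (\<lambda>u z. Phi22 F w1 w2 z u)"
  unfolding h2_coisometry_def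
proof (intro conjI allI exI[where x="\<lambda>f. Gamma_adj (h2_coeffs f)"] ballI)
  fix u and f :: "complex \<Rightarrow> 'y" assume "f \<in> H2"
  then obtain a where a: "summable (\<lambda>n. (norm (a n))\<^sup>2)" and "h2_coeffs f = a" by (rule H2_E)
  then show "h2_inner (\<lambda>z. Phi22 F w1 w2 z u) f = cinner u (Gamma_adj (h2_coeffs f))"
    unfolding h2_inner_def h2_coeffs_Phi22 by (simp add: sums_unique[OF cinner_Gamma_adj_sums[OF a]])
next
  fix f :: "complex \<Rightarrow> 'y" and z :: complex assume "f \<in> H2" "z \<in> ball 0 1"
  then have z: "cmod z < 1" by simp
  from \<open>f \<in> H2\<close> obtain a where a: "summable (\<lambda>n. (norm (a n))\<^sup>2)"
    and f: "\<And>z. cmod z < 1 \<Longrightarrow> (\<lambda>n. cscale (z ^ n) (a n)) sums f z" and "h2_coeffs f = a"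
    by (rule H2_E) blast
  then show "Phi22 F w1 w2 z (Gamma_adj (h2_coeffs f)) = f z"
    using Phi22_sums[OF z, of "Gamma_adj a"] sums_unique2[OF _ f[OF z]]
    by (simp add: Cop_Aop_funpow_Gamma_adj[OF assms a])
qed (rule Phi22_in_H2)

text \<open>A co-isometry's adjoint is an isometry. Testing it on the monomial \<open>z\<^sup>m y\<close>, whose image
  under \<open>\<Gamma>\<^sup>*\<close> is \<open>A\<^sup>*\<^sup>m C\<^sup>* y\<close>, shows that \<open>A\<^sup>*\<^sup>m C\<^sup>*\<close> is isometric.\<close>

lemma norm_Aadj_funpow_Cadj_if_coisometry:
  assumes "h2_coisometry (\<lambda>u z. Phi22 F w1 w2 z u)"
  shows "norm ((Aadj ^^ m) (Cadj y)) = norm y"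
proof -
  from assms obtain S where
    S: "\<And>u f. f \<in> H2 \<Longrightarrow> h2_inner (\<lambda>z. Phi22 F w1 w2 z u) f = cinner u (S f)" and
    right_inverse: "\<And>f z. f \<in> H2 \<Longrightarrow> z \<in> ball 0 1 \<Longrightarrow> Phi22 F w1 w2 z (S f) = f z"
    unfolding h2_coisometry_def by blast
  define f where "f = (\<lambda>z::complex. cscale (z ^ m) y)"
  have "f \<in> H2"
    unfolding f_def by (rule monomial_in_H2)
  have "cinner u (S f) = cinner u ((Aadj ^^ m) (Cadj y))" for u
    using S[OF \<open>f \<in> H2\<close>, of u]
    by (simp add: f_def h2_inner_monomial_right h2_coeffs_Phi22 cinner_Cop_Aop_funpow)
  from this[of "S f - (Aadj ^^ m) (Cadj y)"]
  have "cinner (S f - (Aadj ^^ m) (Cadj y)) (S f - (Aadj ^^ m) (Cadj y)) = 0"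
    by (simp add: cinner_diff_right)
  then have Sf: "S f = (Aadj ^^ m) (Cadj y)"
    by simp
  have "h2_coeffs (\<lambda>z. Phi22 F w1 w2 z (S f)) = h2_coeffs f"
    using right_inverse[OF \<open>f \<in> H2\<close>] by (simp add: mem_ball_0 h2_coeffs_def)
  then have "cinner (S f) (S f) = cinner y y"
    using S[OF \<open>f \<in> H2\<close>, of "S f"]
    by (simp add: f_def h2_inner_monomial_right h2_coeffs_monomial)
  then have "(norm (S f))\<^sup>2 = (norm y)\<^sup>2"
    by (simp flip: Re_cinner_self)
  then show ?thesis
    by (simp add: Sf power2_eq_iff_nonneg)
qed

lemma defect_condition_if_coisometry:
  assumes "h2_coisometry (\<lambda>u z. Phi22 F w1 w2 z u)"
  shows defect_condition
  unfolding defect_condition_iff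
proof (intro conjI allI)
  note isometric = norm_Aadj_funpow_Cadj_if_coisometry[OF assms]
  fix y :: 'y and n :: nat
  have "(norm (D (y, 0)))\<^sup>2 = 0"
    using norm_omega_adj_sq_add_norm_D_sq[of "(y, 0)"] isometric[of 0 y] by (simp add: Cadj_def)
  then show "D (y, 0) = 0" by simp
  define x where "x = (Aadj ^^ n) (Cadj y)"
  have "norm x \<le> norm y"
    unfolding x_def by (rule norm_Aadj_funpow_Cadj_le)
  then have "(norm x)\<^sup>2 \<le> (norm y)\<^sup>2"
    by (rule power_mono) simp
  moreover have "norm (Wadj (0, x)) = norm y"
    using isometric[of "Suc n" y] by (simp add: Aadj_def x_def)
  then have "(norm y)\<^sup>2 + (norm (D (0, x)))\<^sup>2 = (norm x)\<^sup>2"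
    using norm_omega_adj_sq_add_norm_D_sq[of "(0, x)"] by simp
  ultimately have "(norm (D (0, x)))\<^sup>2 \<le> 0"
    by linarith
  then show "D (0, (Aadj ^^ n) (Cadj y)) = 0"
    by (simp add: x_def)
qed

definition adj_orbit_series :: "complex \<Rightarrow> 'y \<Rightarrow> 'u" where
  "adj_orbit_series w y = (\<Sum>n. cscale (w ^ n) ((Aadj ^^ n) (Cadj y)))"

lemma adj_orbit_series_sums:
  assumes "cmod w < 1"
  shows "(\<lambda>n. cscale (w ^ n) ((Aadj ^^ n) (Cadj y))) sums adj_orbit_series w y"
proof -
  have "summable (\<lambda>n. norm (cscale (w ^ n) ((Aadj ^^ n) (Cadj y))))"
    by (rule summable_comparison_test'[OF summable_mult2[OF summable_geometric, of "cmod w" "norm y"], of 0])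
      (simp_all add: assms norm_cscale norm_power mult_left_mono norm_Aadj_funpow_Cadj_le)
  then show ?thesis
    unfolding adj_orbit_series_def by (rule summable_sums[OF summable_norm_cancel])
qed

lemma cinner_Phi21:
  assumes z: "cmod z < 1"
  shows "cinner (Phi21 F w1 w2 z p) y = cinner p (D (y, cscale (cnj z) (adj_orbit_series (cnj z) y)))"
proof -
  have "cinner (Phi22 F w1 w2 z v) y = cinner v (adj_orbit_series (cnj z) y)" for v
  proof -
    have "(\<lambda>n. cinner (cscale (z ^ n) (Cop ((Aop ^^ n) v))) y) sums cinner (Phi22 F w1 w2 z v) y"
      by (rule bounded_linear.sums[OF bounded_linear_cinner_left Phi22_sums[OF z]])
    moreover have "(\<lambda>n. cinner v (cscale (cnj z ^ n) ((Aadj ^^ n) (Cadj y)))) sums cinner v (adj_orbit_series (cnj z) y)"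
      using z by (intro bounded_linear.sums[OF bounded_linear_cinner_right adj_orbit_series_sums]) simp
    ultimately show ?thesis
      by (simp add: cinner_cscale_left cinner_cscale_right cinner_Cop_Aop_funpow sums_unique2)
  qed
  then have "cinner (Phi21 F w1 w2 z p) y = cinner (D p) (y, cscale (cnj z) (adj_orbit_series (cnj z) y))"
    by (simp add: Phi21_def Phi22_def[symmetric] cinner_add_left cinner_cscale_left cinner_cscale_right
        cinner_prod_def)
  then show ?thesis
    by (simp add: positive_operator_selfadjoint[OF positive_operator_D])
qed

lemma defect_coeff_sums:
  assumes w: "cmod w < 1"
  shows "(\<lambda>n. cscale (w ^ n) (defect_coeff y n)) sums D (y, cscale w (adj_orbit_series w y))"
proof -
  have "(\<lambda>n. cscale w (D (0, cscale (w ^ n) ((Aadj ^^ n) (Cadj y))))) sums cscale w (D (0, adj_orbit_series w y))"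
    by (intro bounded_linear.sums[OF bounded_linear_cscale] bounded_linear.sums[OF bounded_linear_D_snd]
        adj_orbit_series_sums w)
  then have "(\<lambda>n. cscale (w ^ Suc n) (defect_coeff y (Suc n))) sums D (0, cscale w (adj_orbit_series w y))"
    by (simp add: defect_coeff_def cscale_cscale D_snd_cscale)
  then have "(\<lambda>n. cscale (w ^ n) (defect_coeff y n)) sums
      (D (0, cscale w (adj_orbit_series w y)) + cscale (w ^ 0) (defect_coeff y 0))"
    by (subst sums_Suc_iff[symmetric]) simp
  also have "D (0, cscale w (adj_orbit_series w y)) + cscale (w ^ 0) (defect_coeff y 0)
      = D (y, cscale w (adj_orbit_series w y))"
    using D_Pair[of y "cscale w (adj_orbit_series w y)"] by (simp add: defect_coeff_def cscale_one add.commute)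
  finally show ?thesis .
qed

lemma Phi21_vanishes_if_defect_condition:
  assumes defect_condition and "cmod z < 1"
  shows "Phi21 F w1 w2 z p = 0"
proof -
  have "D (y, cscale (cnj z) (adj_orbit_series (cnj z) y)) = 0" for y
  proof -
    have "(\<lambda>_. 0) sums D (y, cscale (cnj z) (adj_orbit_series (cnj z) y))"
      using defect_coeff_sums[of "cnj z" y] \<open>cmod z < 1\<close> \<open>defect_condition\<close>
      by (simp add: defect_condition_def)
    then show ?thesis
      by (rule sums_unique2[OF _ sums_zero])
  qed
  then have "cinner (Phi21 F w1 w2 z p) (Phi21 F w1 w2 z p) = 0"
    by (simp add: cinner_Phi21[OF \<open>cmod z < 1\<close>])
  then show ?thesis by simp
qed

lemma defect_condition_if_Phi21_vanishes:
  assumes vanish: "\<forall>z\<in>ball 0 1. \<forall>p\<in>closure (range D). Phi21 F w1 w2 z p = 0"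
  shows defect_condition
proof -
  have "defect_coeff y = (\<lambda>_. 0)" for y
  proof (rule powser_cscale_eq_0_imp_coeffs_eq_0)
    fix w :: complex assume w: "cmod w < 1"
    define X where "X = D (y, cscale w (adj_orbit_series w y))"
    have "X \<in> closure (range D)"
      unfolding X_def by (rule closure_subset[THEN subsetD]) simp
    with vanish w have "cinner (Phi21 F w1 w2 (cnj w) X) y = 0"
      by simp
    then have "X = 0"
      using cinner_Phi21[of "cnj w" X y] w by (simp add: X_def)
    with defect_coeff_sums[OF w, of y] show "(\<lambda>n. cscale (w ^ n) (defect_coeff y n)) sums 0"
      by (simp add: X_def)
  qed
  then show ?thesis
    unfolding defect_condition_def by (simp add: fun_eq_iff)
qed

end

theorem corollary1p4:
  fixes F :: "'u::chilbert_space set"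
    and w1 :: "'u \<Rightarrow> 'y::chilbert_space"
    and w2 :: "'u \<Rightarrow> 'u"
  assumes "closed_csubspace F"
    and "contraction_on F w1 w2"
  shows "h2_coisometry (\<lambda>u z. Phi22 F w1 w2 z u) \<longleftrightarrow>
         (\<forall>z\<in>ball 0 1. \<forall>p\<in>closure (range (Dstar F w1 w2)). Phi21 F w1 w2 z p = 0)"
proof -
  interpret subspace_contraction F w1 w2
    using assms by unfold_locales
  show ?thesis
    using coisometry_if_defect_condition defect_condition_if_coisometry
      Phi21_vanishes_if_defect_condition defect_condition_if_Phi21_vanishes
    by auto
qed

end
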